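(* Let $H$ and $Z$ be as in the context, and assume $Z_{ijkl}(x)=0$ for all $x\in\mathbb{R}^n_+$ and all $i,j,k,l\in\{1,\dots,n\}$. Then $H_{ik}(x)=0$ for all $x\in\mathbb{R}^n_+$ and all $i,k\in\{1,\dots,n-1\}$.
   Context: Let $n\ge6$, $d=\lfloor\frac{n-2}{2}\rfloor$, $\mathbb{R}^n_+=\{x\in\mathbb{R}^n:x_n\ge0\}$, $\partial\mathbb{R}^n_+=\{x_n=0\}$. Let $H=(H_{ik})$ be a trace-free symmetric two-tensor on $\mathbb{R}^n_+$ whose components are polynomials $H_{ik}(x)=\sum_{2\le|\alpha|\le d}h_{ik,\alpha}x^\alpha$, such that: $H_{in}(x)=0$ for all $x\in\mathbb{R}^n_+$ and all $i$; $\sum_k H_{ik}(x)x_k=0$ for all $x\in\partial\mathbb{R}^n_+$ and all $i$; $\partial_nH_{ik}(x)=0$ for all $x\in\partial\mathbb{R}^n_+$ and all $i,k$. Define $A_{ik}=\sum_m\partial_i\partial_mH_{mk}+\sum_m\partial_m\partial_kH_{im}-\Delta H_{ik}-\frac{1}{n-1}\sum_{m,p}\partial_m\partial_pH_{mp}\,\delta_{ik}$ and $Z_{ijkl}=\partial_i\partial_kH_{jl}-\partial_i\partial_lH_{jk}-\partial_j\partial_kH_{il}+\partial_j\partial_lH_{ik}+\frac{1}{n-2}(A_{jl}\delta_{ik}-A_{jk}\delta_{il}-A_{il}\delta_{jk}+A_{ik}\delta_{jl})$. *)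

theory Defs
  imports "HOL-Analysis.Analysis"
begin

text \<open>Points of R^n are functions nat => real; coordinate x_{m+1} of the paper is x m
  (indices shifted to 0..n-1; the normal coordinate x_n is x (n-1)).
  Coordinates with index >= n are irrelevant.\<close>

definition half_space :: "nat \<Rightarrow> (nat \<Rightarrow> real) set" where
  "half_space n = {x. x (n - 1) \<ge> 0}"

definition boundary :: "nat \<Rightarrow> (nat \<Rightarrow> real) set" where
  "boundary n = {x. x (n - 1) = 0}"

definition pd :: "nat \<Rightarrow> ((nat \<Rightarrow> real) \<Rightarrow> real) \<Rightarrow> (nat \<Rightarrow> real) \<Rightarrow> real" where
  "pd i f x = deriv (\<lambda>t. f (x(i := t))) (x i)"

definition multi_idx :: "nat \<Rightarrow> nat \<Rightarrow> (nat \<Rightarrow> nat) set" where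
  "multi_idx n d = {\<alpha>. (\<forall>j. n \<le> j \<longrightarrow> \<alpha> j = 0) \<and> 2 \<le> sum \<alpha> {..<n} \<and> sum \<alpha> {..<n} \<le> d}"

definition monom :: "nat \<Rightarrow> (nat \<Rightarrow> nat) \<Rightarrow> (nat \<Rightarrow> real) \<Rightarrow> real" where
  "monom n \<alpha> x = (\<Prod>j<n. x j ^ \<alpha> j)"

definition kron :: "nat \<Rightarrow> nat \<Rightarrow> real" where
  "kron i k = (if i = k then 1 else 0)"

definition A_tensor :: "nat \<Rightarrow> (nat \<Rightarrow> nat \<Rightarrow> (nat \<Rightarrow> real) \<Rightarrow> real)
    \<Rightarrow> nat \<Rightarrow> nat \<Rightarrow> (nat \<Rightarrow> real) \<Rightarrow> real" where
  "A_tensor n H i k x =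
     (\<Sum>m<n. pd i (pd m (H m k)) x) + (\<Sum>m<n. pd m (pd k (H i m)) x)
     - (\<Sum>m<n. pd m (pd m (H i k)) x)
     - (1 / (real n - 1)) * (\<Sum>m<n. \<Sum>p<n. pd m (pd p (H m p)) x) * kron i k"

definition Z_tensor :: "nat \<Rightarrow> (nat \<Rightarrow> nat \<Rightarrow> (nat \<Rightarrow> real) \<Rightarrow> real)
    \<Rightarrow> nat \<Rightarrow> nat \<Rightarrow> nat \<Rightarrow> nat \<Rightarrow> (nat \<Rightarrow> real) \<Rightarrow> real" where
  "Z_tensor n H i j k l x =
     pd i (pd k (H j l)) x - pd i (pd l (H j k)) x - pd j (pd k (H i l)) x + pd j (pd l (H i k)) x
     + (1 / (real n - 2)) * (A_tensor n H j l x * kron i k - A_tensor n H j k x * kron i l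
                            - A_tensor n H i l x * kron j k + A_tensor n H i k x * kron j l)"

end

theory Submission
  imports Defs "HOL-Computational_Algebra.Polynomial"
begin

(* Consequence: if a sum of homogeneous polynomials of distinct degrees
      vanishes on a scaling-invariant set, so does each summand.
   2. Two inductions on the degree, on the boundary hyperplane and in the interior:
      (a) a homogeneous f with f = \<mu> |x|^2 \<Delta>_T f on the boundary and \<mu> \<le> 0 vanishes there
          (\<Delta>_T = tangential Laplacian);
      (b) a tangential tensor G with (n-3) \<partial>_n^2 G = -R(G), R built from tangential derivatives,
          vanishes if G and \<partial>_n G vanish on the boundary.
   3. For H homogeneous of degree m \<ge> 2 (locale hom_Z_flat): the divergence of Z gives the
      Cotton-type symmetry \<partial>_k A_jl = \<partial>_l A_jk; contracting Z with x_i x_k on the boundary shows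
      that \<phi> = x_i x_k A_ik satisfies (a), whence A and then H vanish tangentially on the boundary;
      the component Z_{jnln} gives the relation of (b), whence H_{jl} = 0 everywhere.
   4. A general H is the sum of its homogeneous components (locale hom_decomposition); by 1 every
      hypothesis passes to each component, so 3 applies to each of them. *)

section \<open>Partial derivatives along coordinate lines\<close>

definition coord_diff :: "((nat \<Rightarrow> real) \<Rightarrow> real) \<Rightarrow> bool" where
  "coord_diff f \<longleftrightarrow> (\<forall>i x t. ((\<lambda>s. f (x(i:=s))) has_real_derivative pd i f (x(i:=t))) (at t))"

lemma pd_from_deriv:
  assumes "\<And>x t. ((\<lambda>s. f (x(i:=s))) has_real_derivative g (x(i:=t))) (at t)"
  shows "pd i f = g"
proof
  fix x
  have "deriv (\<lambda>s. f (x(i:=s))) (x i) = g (x(i:= x i))"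
    by (rule DERIV_imp_deriv[OF assms])
  then show "pd i f x = g x" by (simp add: pd_def)
qed

lemma coord_diffD:
  "coord_diff f \<Longrightarrow> ((\<lambda>s. f (x(i:=s))) has_real_derivative pd i f (x(i:=t))) (at t)"
  by (simp add: coord_diff_def)

lemma pd_const [simp]: "pd i (\<lambda>x. c) = (\<lambda>x. 0)"
  by (rule pd_from_deriv) simp

lemma pd_coord [simp]: "pd i (\<lambda>x. x j) = (\<lambda>x. if i = j then 1 else 0)"
proof (rule pd_from_deriv)
  fix x :: "nat \<Rightarrow> real" and t
  show "((\<lambda>s. (x(i:=s)) j) has_real_derivative (if i = j then 1 else 0)) (at t)"
    by (cases "i = j") (auto intro!: derivative_eq_intros)
qed

lemma pd_add:
  "coord_diff f \<Longrightarrow> coord_diff g \<Longrightarrow> pd i (\<lambda>x. f x + g x) = (\<lambda>x. pd i f x + pd i g x)"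
  by (rule pd_from_deriv) (auto intro!: derivative_eq_intros coord_diffD)

lemma pd_minus:
  "coord_diff f \<Longrightarrow> coord_diff g \<Longrightarrow> pd i (\<lambda>x. f x - g x) = (\<lambda>x. pd i f x - pd i g x)"
  by (rule pd_from_deriv) (auto intro!: derivative_eq_intros coord_diffD)

lemma pd_mult:
  "coord_diff f \<Longrightarrow> coord_diff g \<Longrightarrow> pd i (\<lambda>x. f x * g x) = (\<lambda>x. pd i f x * g x + f x * pd i g x)"
  by (rule pd_from_deriv) (auto intro!: derivative_eq_intros coord_diffD)

lemma pd_sum:
  "(\<And>m. m \<in> S \<Longrightarrow> coord_diff (F m)) \<Longrightarrow> pd i (\<lambda>x. \<Sum>m\<in>S. F m x) = (\<lambda>x. \<Sum>m\<in>S. pd i (F m) x)"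
  by (rule pd_from_deriv) (auto intro!: derivative_eq_intros coord_diffD)

lemma pd_cmult: "coord_diff f \<Longrightarrow> pd i (\<lambda>x. c * f x) = (\<lambda>x. c * pd i f x)"
  using pd_mult[of "\<lambda>x. c" f i] by (simp add: coord_diff_def)

lemma pd_neg: "coord_diff f \<Longrightarrow> pd i (\<lambda>x. - f x) = (\<lambda>x. - pd i f x)"
  using pd_cmult[of f i "-1"] by simp

lemma pd_div: "coord_diff f \<Longrightarrow> pd i (\<lambda>x. f x / c) = (\<lambda>x. pd i f x / c)"
  using pd_cmult[of f i "inverse c"] by (simp add: divide_inverse mult.commute)

lemma vanish_from_hyperplane:
  assumes "coord_diff f" and "coord_diff (pd i f)"
    and "\<And>y. pd i (pd i f) y = 0"
    and "f (x(i := 0)) = 0" and "pd i f (x(i := 0)) = 0"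
  shows "f x = 0"
proof -
  have "\<forall>t. ((\<lambda>s. pd i f (x(i:=s))) has_real_derivative 0) (at t)"
    using coord_diffD[OF assms(2), of x i] assms(3) by simp
  then have "pd i f (x(i:=t)) = 0" for t
    using DERIV_isconst_all assms(5) by metis
  then have "\<forall>t. ((\<lambda>s. f (x(i:=s))) has_real_derivative 0) (at t)"
    using coord_diffD[OF assms(1), of x i] by simp
  then have "f (x(i:= x i)) = f (x(i:=0))" using DERIV_isconst_all by blast
  then show ?thesis using assms(4) by simp
qed

inductive poly_fun :: "((nat \<Rightarrow> real) \<Rightarrow> real) \<Rightarrow> bool" where
  const: "poly_fun (\<lambda>x. c)"
| coord: "poly_fun (\<lambda>x. x j)"
| add: "poly_fun f \<Longrightarrow> poly_fun g \<Longrightarrow> poly_fun (\<lambda>x. f x + g x)"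
| mult: "poly_fun f \<Longrightarrow> poly_fun g \<Longrightarrow> poly_fun (\<lambda>x. f x * g x)"

lemma poly_fun_coord_diff_pd: "poly_fun f \<Longrightarrow> coord_diff f \<and> poly_fun (pd i f)"
proof (induction rule: poly_fun.induct)
  case (const c) then show ?case by (simp add: coord_diff_def poly_fun.const)
next
  case (coord j) then show ?case
    by (auto simp: coord_diff_def poly_fun.const intro!: derivative_eq_intros)
next
  case (add f g) then show ?case
    by (simp add: pd_add poly_fun.add coord_diff_def[of "\<lambda>x. f x + g x"])
       (auto intro!: derivative_eq_intros coord_diffD)
next
  case (mult f g) then show ?case
    by (simp add: pd_mult pd_add poly_fun.add poly_fun.mult coord_diff_def[of "\<lambda>x. f x * g x"])
       (auto intro!: derivative_eq_intros coord_diffD)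
qed

lemma poly_fun_coord_diff [simp]: "poly_fun f \<Longrightarrow> coord_diff f"
  and poly_fun_pd [simp]: "poly_fun f \<Longrightarrow> poly_fun (pd i f)"
  using poly_fun_coord_diff_pd by blast+

lemma poly_fun_const [simp]: "poly_fun (\<lambda>x. c)"
  and poly_fun_coord [simp]: "poly_fun (\<lambda>x. x j)"
  and poly_fun_add [simp]: "poly_fun f \<Longrightarrow> poly_fun g \<Longrightarrow> poly_fun (\<lambda>x. f x + g x)"
  and poly_fun_mult [simp]: "poly_fun f \<Longrightarrow> poly_fun g \<Longrightarrow> poly_fun (\<lambda>x. f x * g x)"
  by (fact poly_fun.intros)+

lemma poly_fun_minus [simp]: "poly_fun f \<Longrightarrow> poly_fun g \<Longrightarrow> poly_fun (\<lambda>x. f x - g x)"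
  using poly_fun.add[of f "\<lambda>x. (-1) * g x"] poly_fun.mult[OF poly_fun.const, of g "-1"] by simp

lemma poly_fun_div [simp]: "poly_fun f \<Longrightarrow> poly_fun (\<lambda>x. f x / c)"
  using poly_fun.mult[of f "\<lambda>x. inverse c"] poly_fun.const by (simp add: divide_inverse)

lemma poly_fun_sum [simp]: "(\<And>m. m \<in> S \<Longrightarrow> poly_fun (F m)) \<Longrightarrow> poly_fun (\<lambda>x. \<Sum>m\<in>S. F m x)"
  by (induction S rule: infinite_finite_induct) simp_all

lemma pd_comm: "poly_fun f \<Longrightarrow> pd i (pd j f) = pd j (pd i f)"
  by (induction rule: poly_fun.induct) (simp_all add: pd_add pd_mult algebra_simps)

section \<open>Homogeneous polynomials\<close>

inductive hom_poly :: "nat \<Rightarrow> nat \<Rightarrow> ((nat \<Rightarrow> real) \<Rightarrow> real) \<Rightarrow> bool" for n where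
  zero: "hom_poly n e (\<lambda>x. 0)"
| const: "hom_poly n 0 (\<lambda>x. c)"
| coord: "j < n \<Longrightarrow> hom_poly n 1 (\<lambda>x. x j)"
| add: "hom_poly n e f \<Longrightarrow> hom_poly n e g \<Longrightarrow> hom_poly n e (\<lambda>x. f x + g x)"
| mult: "hom_poly n e f \<Longrightarrow> hom_poly n e' g \<Longrightarrow> hom_poly n (e + e') (\<lambda>x. f x * g x)"

lemma hom_poly_poly_fun [simp]: "hom_poly n e f \<Longrightarrow> poly_fun f"
  by (induction rule: hom_poly.induct) auto

lemma pd_hom_poly_0: "hom_poly n e f \<Longrightarrow> e = 0 \<Longrightarrow> pd i f = (\<lambda>x. 0)"
  by (induction rule: hom_poly.induct) (simp_all add: pd_add pd_mult)

lemma hom_poly_pd [simp]: "hom_poly n e f \<Longrightarrow> hom_poly n (e - 1) (pd i f)"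
proof (induction rule: hom_poly.induct)
  case (coord j) then show ?case by (simp add: hom_poly.const hom_poly.zero)
next
  case (add e f g) then show ?case by (simp add: pd_add hom_poly.add)
next
  case (mult e f e' g)
  have "hom_poly n (e + e' - 1) (\<lambda>x. pd i f x * g x)"
  proof (cases "e = 0")
    case True then show ?thesis using pd_hom_poly_0[OF mult.hyps(1)] by (simp add: hom_poly.zero)
  next
    case False
    then have "e - 1 + e' = e + e' - 1" by simp
    then show ?thesis using hom_poly.mult[OF mult.IH(1) mult.hyps(2)] by simp
  qed
  moreover have "hom_poly n (e + e' - 1) (\<lambda>x. f x * pd i g x)"
  proof (cases "e' = 0")
    case True then show ?thesis using pd_hom_poly_0[OF mult.hyps(2)] by (simp add: hom_poly.zero)
  next
    case False
    then have "e + (e' - 1) = e + e' - 1" by simp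
    then show ?thesis using hom_poly.mult[OF mult.hyps(1) mult.IH(2)] by simp
  qed
  ultimately show ?case using mult.hyps by (simp add: pd_mult hom_poly.add)
qed (simp_all add: hom_poly.zero)

lemma hom_poly_pd2: "hom_poly n e f \<Longrightarrow> hom_poly n (e - 2) (pd a (pd b f))"
  using hom_poly_pd[of n e f b] hom_poly_pd[of n "e - 1" "pd b f" a] by (simp add: numeral_2_eq_2)

lemma pd2_hom_poly_low: "hom_poly n e f \<Longrightarrow> e < 2 \<Longrightarrow> pd a (pd b f) = (\<lambda>x. 0)"
  using hom_poly_pd[of n e f b] pd_hom_poly_0[of n "e - 1" "pd b f" a] by simp

lemma hom_poly_cmult: "hom_poly n e f \<Longrightarrow> hom_poly n e (\<lambda>x. c * f x)"
  using hom_poly.mult[where e=0 and f="\<lambda>x. c" and e'=e and g=f, OF hom_poly.const] by simp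

lemma hom_poly_multc: "hom_poly n e f \<Longrightarrow> hom_poly n e (\<lambda>x. f x * c)"
  using hom_poly_cmult[of n e f c] by (simp add: mult.commute)

lemma hom_poly_divc: "hom_poly n e f \<Longrightarrow> hom_poly n e (\<lambda>x. f x / c)"
  using hom_poly_multc[of n e f "inverse c"] by (simp add: divide_inverse)

lemma hom_poly_minus: "hom_poly n e f \<Longrightarrow> hom_poly n e g \<Longrightarrow> hom_poly n e (\<lambda>x. f x - g x)"
  using hom_poly.add[of n e f "\<lambda>x. (-1) * g x"] hom_poly_cmult[of n e g "-1"] by simp

lemma hom_poly_sum: "(\<And>m. m \<in> S \<Longrightarrow> hom_poly n e (F m)) \<Longrightarrow> hom_poly n e (\<lambda>x. \<Sum>m\<in>S. F m x)"
  by (induction S rule: infinite_finite_induct) (simp_all add: hom_poly.zero hom_poly.add)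

lemma hom_poly_prod:
  "finite S \<Longrightarrow> (\<And>m. m \<in> S \<Longrightarrow> hom_poly n (E m) (F m))
    \<Longrightarrow> hom_poly n (\<Sum>m\<in>S. E m) (\<lambda>x. \<Prod>m\<in>S. F m x)"
proof (induction S rule: finite_induct)
  case empty then show ?case using hom_poly.const[of n 1] by simp
next
  case (insert a A) then show ?case using hom_poly.mult[where e="E a" and f="F a"] by simp
qed

lemma hom_poly_power: "j < n \<Longrightarrow> hom_poly n k (\<lambda>x. x j ^ k)"
proof (induction k)
  case 0 then show ?case using hom_poly.const[of n 1] by simp
next
  case (Suc k) then show ?case using hom_poly.mult[OF hom_poly.coord[of j n] Suc.IH] by simp
qed

lemma hom_poly_monom: "(\<forall>j. n \<le> j \<longrightarrow> \<alpha> j = 0) \<Longrightarrow> hom_poly n (sum \<alpha> {..<n}) (monom n \<alpha>)"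
  unfolding monom_def using hom_poly_prod[of "{..<n}" n \<alpha> "\<lambda>j x. x j ^ \<alpha> j"] hom_poly_power
  by (simp add: fun_eq_iff)

lemma euler_identity: "hom_poly n e f \<Longrightarrow> (\<Sum>a<n. x a * pd a f x) = real e * f x"
proof (induction rule: hom_poly.induct)
  case (coord j)
  then show ?case by (simp add: if_distrib cong: if_cong)
next
  case (add e f g)
  then show ?case by (simp add: pd_add sum.distrib distrib_left distrib_right)
next
  case (mult e f e' g)
  have "(\<Sum>a<n. x a * (pd a f x * g x + f x * pd a g x))
      = (\<Sum>a<n. x a * pd a f x) * g x + f x * (\<Sum>a<n. x a * pd a g x)"
    by (simp add: sum.distrib sum_distrib_left sum_distrib_right algebra_simps)
  with mult show ?case by (simp add: pd_mult algebra_simps)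
qed simp_all

definition scale :: "real \<Rightarrow> (nat \<Rightarrow> real) \<Rightarrow> (nat \<Rightarrow> real)" where
  "scale s x = (\<lambda>j. s * x j)"

lemma hom_poly_scale: "hom_poly n e f \<Longrightarrow> f (scale s x) = s ^ e * f x"
  by (induction rule: hom_poly.induct) (simp_all add: scale_def power_add algebra_simps)

text \<open>A homogeneous polynomial vanishing on the half space vanishes everywhere (scale by -1).\<close>
lemma hom_poly_vanish_from_half_space:
  assumes "hom_poly n e f" and "\<forall>x\<in>half_space n. f x = 0"
  shows "f x = 0"
proof (cases "x \<in> half_space n")
  case False
  then have "scale (-1) x \<in> half_space n" unfolding half_space_def scale_def by simp
  then show ?thesis using assms hom_poly_scale[OF assms(1), of "-1" x] by simp
qed (use assms in simp)

section \<open>Separating homogeneous components\<close>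

text \<open>If a finite sum of homogeneous polynomials of pairwise distinct degrees vanishes on a set
  closed under positive scaling, then so does every summand: at a fixed point x the scaled sum
  is a polynomial in s > 0 whose coefficients are the summands at x.\<close>
lemma hom_components_vanish:
  assumes fin: "finite E" and inj: "inj_on dg E"
    and hom: "\<And>e. e \<in> E \<Longrightarrow> hom_poly n (dg e) (g e)"
    and scale_closed: "\<And>x s. x \<in> S \<Longrightarrow> s > 0 \<Longrightarrow> scale s x \<in> S"
    and sum0: "\<And>x. x \<in> S \<Longrightarrow> (\<Sum>e\<in>E. g e x) = 0"
    and e0: "e0 \<in> E" and x: "x \<in> S"
  shows "g e0 x = 0"
proof -
  define p where "p = (\<Sum>e\<in>E. Polynomial.monom (g e x) (dg e))"
  have "poly p s = 0" if "s > 0" for s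
  proof -
    have "poly p s = (\<Sum>e\<in>E. g e x * s ^ dg e)" unfolding p_def by (simp add: poly_sum poly_monom)
    also have "\<dots> = (\<Sum>e\<in>E. g e (scale s x))"
      by (intro sum.cong refl) (simp add: hom_poly_scale[OF hom] mult.commute)
    also have "\<dots> = 0" using sum0 scale_closed x that by simp
    finally show ?thesis .
  qed
  then have "{0<..} \<subseteq> {s. poly p s = 0}" by auto
  then have "p = 0" using poly_roots_finite[of p] infinite_Ioi[of "0::real"] finite_subset by blast
  then have "coeff p (dg e0) = 0" by simp
  moreover have "coeff p (dg e0) = (\<Sum>e\<in>E. if dg e = dg e0 then g e x else 0)"
    unfolding p_def by (simp add: coeff_sum)
  moreover have "\<dots> = (\<Sum>e\<in>E. if e = e0 then g e x else 0)"
    using inj e0 by (intro sum.cong refl) (auto simp: inj_on_def)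
  ultimately show ?thesis using fin e0 by simp
qed

section \<open>Vanishing on the boundary hyperplane\<close>

definition norm_sq :: "nat \<Rightarrow> (nat \<Rightarrow> real) \<Rightarrow> real" where
  "norm_sq n x = (\<Sum>i<n. x i * x i)"

definition lap_tan :: "nat \<Rightarrow> ((nat \<Rightarrow> real) \<Rightarrow> real) \<Rightarrow> (nat \<Rightarrow> real) \<Rightarrow> real" where
  "lap_tan n f x = (\<Sum>j<n - 1. pd j (pd j f) x)"

lemma sum_split_last: "1 \<le> (n::nat) \<Longrightarrow> (\<Sum>j<n. f j) = (\<Sum>j<n - 1. f j) + f (n - 1)"
  by (cases n) auto

lemma boundary_normal_coord: "x \<in> boundary n \<Longrightarrow> x (n - 1) = 0"
  by (simp add: boundary_def)

lemma pd_tangential_cong: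
  assumes "\<forall>y\<in>boundary n. F y = G y" "j \<noteq> n - 1" "x \<in> boundary n"
  shows "pd j F x = pd j G x"
proof -
  have "(\<lambda>t. F (x(j:=t))) = (\<lambda>t. G (x(j:=t)))"
    using assms by (auto simp: boundary_def)
  then show ?thesis by (simp add: pd_def)
qed

lemma pd_tangential_zero:
  "\<forall>y\<in>boundary n. F y = 0 \<Longrightarrow> j \<noteq> n - 1 \<Longrightarrow> x \<in> boundary n \<Longrightarrow> pd j F x = 0"
  using pd_tangential_cong[of n F "\<lambda>x. 0" j x] by simp

lemma pd2_tangential_zero:
  assumes "\<forall>y\<in>boundary n. f y = 0" "a < n - 1" "b < n - 1" "x \<in> boundary n"
  shows "pd a (pd b f) x = 0"
proof -
  have "\<forall>y\<in>boundary n. pd b f y = 0" using pd_tangential_zero[of n f b] assms by auto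
  then show ?thesis using pd_tangential_zero[of n "pd b f" a x] assms by auto
qed

lemma lap_tan_boundary_cong:
  assumes "\<forall>y\<in>boundary n. F y = G y" "x \<in> boundary n"
  shows "lap_tan n F x = lap_tan n G x"
  unfolding lap_tan_def
proof (rule sum.cong)
  fix j assume "j \<in> {..<n - 1}"
  then have j: "j \<noteq> n - 1" by simp
  then have "\<forall>y\<in>boundary n. pd j F y = pd j G y" using pd_tangential_cong[OF assms(1)] by blast
  then show "pd j (pd j F) x = pd j (pd j G) x" using pd_tangential_cong j assms(2) by blast
qed simp

lemma lap_tan_cmult: "poly_fun f \<Longrightarrow> lap_tan n (\<lambda>x. c * f x) x = c * lap_tan n f x"
  unfolding lap_tan_def by (simp add: pd_cmult sum_distrib_left)

lemma poly_fun_norm_sq [simp]: "poly_fun (norm_sq n)"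
  unfolding norm_sq_def[abs_def] by simp

lemma pd_norm_sq: "j < n \<Longrightarrow> pd j (norm_sq n) = (\<lambda>x. 2 * x j)"
proof -
  assume j: "j < n"
  have "pd j (norm_sq n) = (\<lambda>x. \<Sum>i<n. (if j = i then 1 else 0) * x i + x i * (if j = i then 1 else 0))"
    unfolding norm_sq_def[abs_def] by (simp add: pd_sum pd_mult)
  also have "\<dots> = (\<lambda>x. 2 * x j)" using j by (simp add: if_distrib sum.distrib cong: if_cong)
  finally show ?thesis .
qed

lemma pd2_norm_sq_mult:
  assumes "poly_fun g" "j < n"
  shows "pd j (pd j (\<lambda>y. norm_sq n y * g y)) y
    = 2 * g y + 4 * y j * pd j g y + norm_sq n y * pd j (pd j g) y"
proof -
  have "pd j (\<lambda>y. norm_sq n y * g y) = (\<lambda>y. 2 * (y j * g y) + norm_sq n y * pd j g y)"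
    using assms by (simp add: pd_mult pd_norm_sq mult.assoc)
  then show ?thesis
    using assms by (simp add: pd_add pd_cmult pd_mult pd_norm_sq)
qed

lemma lap_tan_norm_sq_mult:
  assumes "1 \<le> n" "hom_poly n e g" "y \<in> boundary n"
  shows "lap_tan n (\<lambda>y. norm_sq n y * g y) y
    = (2 * real (n - 1) + 4 * real e) * g y + norm_sq n y * lap_tan n g y"
proof -
  have euler: "(\<Sum>j<n - 1. y j * pd j g y) = real e * g y"
    using euler_identity[OF assms(2), of y] sum_split_last[OF assms(1), of "\<lambda>j. y j * pd j g y"]
      boundary_normal_coord[OF assms(3)] by simp
  have "lap_tan n (\<lambda>y. norm_sq n y * g y) y
      = (\<Sum>j<n - 1. 2 * g y + 4 * (y j * pd j g y) + norm_sq n y * pd j (pd j g) y)"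
    unfolding lap_tan_def using assms(2) by (intro sum.cong) (auto simp: pd2_norm_sq_mult)
  also have "\<dots> = 2 * real (n - 1) * g y + 4 * (\<Sum>j<n - 1. y j * pd j g y)
      + norm_sq n y * lap_tan n g y"
    unfolding lap_tan_def by (simp add: sum.distrib sum_distrib_left)
  also have "\<dots> = (2 * real (n - 1) + 4 * real e) * g y + norm_sq n y * lap_tan n g y"
    unfolding euler by (simp add: algebra_simps)
  finally show ?thesis .
qed

text \<open>A homogeneous polynomial with f = \<mu> |x|^2 \<Delta>_T f on the boundary, \<mu> \<le> 0, vanishes on the
  boundary: g = \<Delta>_T f is homogeneous of degree e - 2 and satisfies the same relation with
  \<mu> / \<kappa>, \<kappa> \<ge> 1, so induction on the degree applies.\<close>
lemma boundary_vanishing: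
  assumes "1 \<le> n" and "hom_poly n e f" and "\<mu> \<le> 0"
    and "\<forall>x\<in>boundary n. f x = \<mu> * norm_sq n x * lap_tan n f x" and "x \<in> boundary n"
  shows "f x = 0"
  using assms(2-)
proof (induction e arbitrary: f \<mu> x rule: less_induct)
  case (less e)
  define g where "g = lap_tan n f"
  have f_eq: "f y = \<mu> * (norm_sq n y * g y)" if "y \<in> boundary n" for y
    using less.prems(3) that unfolding g_def by simp
  show ?case
  proof (cases "e < 2")
    case True
    then have "g = (\<lambda>x. 0)"
      unfolding g_def lap_tan_def[abs_def] using pd2_hom_poly_low[OF less.prems(1)] by simp
    then show ?thesis using f_eq less.prems(4) by simp
  next
    case False
    have hom_g: "hom_poly n (e - 2) g"
      unfolding g_def lap_tan_def[abs_def] by (rule hom_poly_sum) (rule hom_poly_pd2[OF less.prems(1)])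
    define \<kappa> where "\<kappa> = 1 - \<mu> * (2 * real (n - 1) + 4 * real (e - 2))"
    have \<kappa>: "\<kappa> \<ge> 1" unfolding \<kappa>_def using less.prems(2) by (simp add: mult_nonpos_nonneg)
    have "g y = (\<mu> / \<kappa>) * norm_sq n y * lap_tan n g y" if y: "y \<in> boundary n" for y
    proof -
      have "g y = lap_tan n f y" by (simp add: g_def)
      also have "\<dots> = lap_tan n (\<lambda>y. \<mu> * (norm_sq n y * g y)) y"
        by (rule lap_tan_boundary_cong[OF _ y]) (use f_eq in simp)
      also have "\<dots> = \<mu> * lap_tan n (\<lambda>y. norm_sq n y * g y) y"
        using hom_g by (simp add: lap_tan_cmult)
      also have "\<dots> = \<mu> * ((2 * real (n - 1) + 4 * real (e - 2)) * g y + norm_sq n y * lap_tan n g y)"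
        using lap_tan_norm_sq_mult[OF assms(1) hom_g y] by simp
      finally have "\<kappa> * g y = \<mu> * norm_sq n y * lap_tan n g y"
        unfolding \<kappa>_def by (simp add: algebra_simps)
      then show ?thesis using \<kappa> by (simp add: field_simps)
    qed
    moreover have "\<mu> / \<kappa> \<le> 0" using less.prems(2) \<kappa> by (simp add: divide_nonpos_pos)
    ultimately have "g y = 0" if "y \<in> boundary n" for y
      using less.IH[of "e - 2" g "\<mu> / \<kappa>" y] False hom_g that by simp
    then show ?thesis using f_eq less.prems(4) by simp
  qed
qed

section \<open>Vanishing in the interior\<close>

text \<open>Right-hand side of the normal equation (n - 3) \<partial>_n^2 G_jl = - R_jl(G) obtained from Z_{jnln} = 0.
  When G vanishes on the boundary and G_{cn} = G_{nc} = 0, every term of R vanishes there,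
  since it involves a tangential derivative of a boundary-vanishing function.\<close>
definition tan_rhs :: "nat \<Rightarrow> (nat \<Rightarrow> nat \<Rightarrow> (nat \<Rightarrow> real) \<Rightarrow> real) \<Rightarrow> nat \<Rightarrow> nat \<Rightarrow> (nat \<Rightarrow> real) \<Rightarrow> real"
  where "tan_rhs n G j l x = (\<Sum>m<n. pd j (pd m (G m l)) x) + (\<Sum>m<n. pd l (pd m (G m j)) x)
     - (\<Sum>m<n - 1. pd m (pd m (G j l)) x)
     - 2 / (real n - 1) * (\<Sum>m<n. \<Sum>p<n. pd m (pd p (G m p)) x) * kron j l"

definition normal_free :: "nat \<Rightarrow> (nat \<Rightarrow> nat \<Rightarrow> (nat \<Rightarrow> real) \<Rightarrow> real) \<Rightarrow> bool" where
  "normal_free n G \<longleftrightarrow> (\<forall>c<n. G c (n - 1) = (\<lambda>x. 0) \<and> G (n - 1) c = (\<lambda>x. 0))"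

definition boundary_flat :: "nat \<Rightarrow> (nat \<Rightarrow> nat \<Rightarrow> (nat \<Rightarrow> real) \<Rightarrow> real) \<Rightarrow> bool" where
  "boundary_flat n G \<longleftrightarrow> (\<forall>c<n. \<forall>d<n. \<forall>x\<in>boundary n. G c d x = 0 \<and> pd (n - 1) (G c d) x = 0)"

definition normal_equation :: "nat \<Rightarrow> (nat \<Rightarrow> nat \<Rightarrow> (nat \<Rightarrow> real) \<Rightarrow> real) \<Rightarrow> bool" where
  "normal_equation n G \<longleftrightarrow> (\<forall>j<n - 1. \<forall>l<n - 1. \<forall>x.
     (real n - 3) * pd (n - 1) (pd (n - 1) (G j l)) x = - tan_rhs n G j l x)"

lemma poly_fun_tan_rhs: "(\<And>c d. poly_fun (G c d)) \<Longrightarrow> poly_fun (tan_rhs n G j l)"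
  unfolding tan_rhs_def[abs_def] by simp

lemma pd_tan_rhs:
  assumes "\<And>c d. poly_fun (G c d)"
  shows "pd i (tan_rhs n G j l) = tan_rhs n (\<lambda>c d. pd i (G c d)) j l"
proof -
  have "pd i (tan_rhs n G j l) = (\<lambda>x. (\<Sum>m<n. pd i (pd j (pd m (G m l))) x)
     + (\<Sum>m<n. pd i (pd l (pd m (G m j))) x) - (\<Sum>m<n - 1. pd i (pd m (pd m (G j l))) x)
     - 2 / (real n - 1) * (\<Sum>m<n. \<Sum>p<n. pd i (pd m (pd p (G m p))) x) * kron j l)"
    unfolding tan_rhs_def[abs_def] using assms by (simp add: pd_sum pd_add pd_minus pd_mult pd_div)
  moreover have "pd i (pd a (pd b (G c d))) = pd a (pd b (pd i (G c d)))" for a b c d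
    using assms by (metis pd_comm poly_fun_pd)
  ultimately show ?thesis unfolding tan_rhs_def[abs_def] by (simp only:)
qed

lemma normal_free_pd: "normal_free n G \<Longrightarrow> normal_free n (\<lambda>c d. pd i (G c d))"
  unfolding normal_free_def by simp

lemma tan_rhs_boundary_zero:
  assumes nf: "normal_free n G" and G0: "\<forall>c<n. \<forall>d<n. \<forall>x\<in>boundary n. G c d x = 0"
    and x: "x \<in> boundary n" and j: "j < n - 1" and l: "l < n - 1"
  shows "tan_rhs n G j l x = 0"
proof -
  text \<open>Each second derivative occurring in R has a tangential outer derivative; it is either the
    derivative of a zero function or a tangential second derivative of a boundary-vanishing one.\<close>
  have term0: "pd a (pd b (G c d)) x = 0"
    if "c < n" "d < n" "a < n - 1" "b < n - 1 \<or> c = n - 1 \<or> d = n - 1" for a b c d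
  proof (cases "c = n - 1 \<or> d = n - 1")
    case True
    then have "G c d = (\<lambda>x. 0)" using nf that unfolding normal_free_def by auto
    then show ?thesis by simp
  next
    case False
    then show ?thesis using pd2_tangential_zero[of n "G c d" a b x] G0 that x by auto
  qed
  have "pd j (pd m (G m l)) x = 0" "pd l (pd m (G m j)) x = 0" if "m < n" for m
    by (rule term0; use that j l in auto)+
  moreover have "pd m (pd m (G j l)) x = 0" if "m < n - 1" for m
    by (rule term0) (use that j l in auto)
  moreover have "pd m (pd p (G m p)) x = 0" if "m < n" "p < n" for m p
  proof (cases "m = n - 1")
    case True
    then have "G m p = (\<lambda>x. 0)" using nf that unfolding normal_free_def by auto
    then show ?thesis by simp
  qed (rule term0, use that in auto)
  ultimately have "(\<Sum>m<n. pd j (pd m (G m l)) x) = 0" "(\<Sum>m<n. pd l (pd m (G m j)) x) = 0"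
    "(\<Sum>m<n - 1. pd m (pd m (G j l)) x) = 0" "(\<Sum>m<n. \<Sum>p<n. pd m (pd p (G m p)) x) = 0"
    by simp_all
  then show ?thesis unfolding tan_rhs_def by simp
qed

lemma normal_equation_pd:
  assumes poly: "\<And>c d. poly_fun (G c d)" and eq: "normal_equation n G"
  shows "normal_equation n (\<lambda>c d. pd (n - 1) (G c d))"
  unfolding normal_equation_def
proof (intro allI impI)
  fix j l x assume "j < n - 1" "l < n - 1"
  then have "(\<lambda>x. (real n - 3) * pd (n - 1) (pd (n - 1) (G j l)) x) = (\<lambda>x. - tan_rhs n G j l x)"
    using eq unfolding normal_equation_def by blast
  then have "pd (n - 1) (\<lambda>x. (real n - 3) * pd (n - 1) (pd (n - 1) (G j l)) x) x
      = pd (n - 1) (\<lambda>x. - tan_rhs n G j l x) x" by simp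
  then show "(real n - 3) * pd (n - 1) (pd (n - 1) (pd (n - 1) (G j l))) x
      = - tan_rhs n (\<lambda>c d. pd (n - 1) (G c d)) j l x"
    using poly poly_fun_tan_rhs[OF poly] by (simp add: pd_cmult pd_neg pd_tan_rhs)
qed

lemma boundary_flat_pd2:
  assumes n4: "4 \<le> n" and poly: "\<And>c d. poly_fun (G c d)"
    and nf: "normal_free n G" and eq: "normal_equation n G" and bf: "boundary_flat n G"
  shows "boundary_flat n (\<lambda>c d. pd (n - 1) (pd (n - 1) (G c d)))"
  unfolding boundary_flat_def
proof (intro allI impI ballI)
  fix c d y assume c: "c < n" and d: "d < n" and y: "y \<in> boundary n"
  define G1 where "G1 = (\<lambda>c d. pd (n - 1) (G c d))"
  show "pd (n - 1) (pd (n - 1) (G c d)) y = 0 \<and> pd (n - 1) (pd (n - 1) (pd (n - 1) (G c d))) y = 0"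
  proof (cases "c = n - 1 \<or> d = n - 1")
    case True
    then have "G c d = (\<lambda>x. 0)" using nf c d unfolding normal_free_def by auto
    then show ?thesis by simp
  next
    case False
    then have cd: "c < n - 1" "d < n - 1" using c d by auto
    have "tan_rhs n G c d y = 0"
      using tan_rhs_boundary_zero[OF nf _ y cd] bf unfolding boundary_flat_def by blast
    moreover have "tan_rhs n G1 c d y = 0"
      using tan_rhs_boundary_zero[OF _ _ y cd, of G1] nf bf
      unfolding G1_def boundary_flat_def by (simp add: normal_free_pd)
    moreover have "(real n - 3) * pd (n - 1) (pd (n - 1) (G c d)) y = - tan_rhs n G c d y"
      using eq cd unfolding normal_equation_def by blast
    moreover have "(real n - 3) * pd (n - 1) (pd (n - 1) (G1 c d)) y = - tan_rhs n G1 c d y"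
      using normal_equation_pd[OF poly eq] cd unfolding normal_equation_def G1_def by blast
    moreover have "real n - 3 \<noteq> 0" using n4 by simp
    ultimately show ?thesis unfolding G1_def by simp
  qed
qed

text \<open>A tangential tensor satisfying the normal equation and vanishing to first order on the
  boundary vanishes: by induction on the degree \<partial>_n^2 G = 0, so G is affine in x_n.\<close>
lemma interior_vanishing:
  assumes n4: "4 \<le> n" and hom: "\<forall>c d. hom_poly n e (G c d)"
    and "normal_free n G" "normal_equation n G" "boundary_flat n G"
    and j: "j < n - 1" and l: "l < n - 1"
  shows "G j l x = 0"
  using assms(2-5)
proof (induction e arbitrary: G x rule: less_induct)
  case (less e)
  have poly: "poly_fun (G c d)" for c d using less.prems(1) hom_poly_poly_fun by blast
  define G2 where "G2 = (\<lambda>c d. pd (n - 1) (pd (n - 1) (G c d)))"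
  have G2_zero: "G2 j l y = 0" for y
  proof (cases "e < 2")
    case True
    then show ?thesis unfolding G2_def using pd2_hom_poly_low[of n e "G j l"] less.prems(1) by simp
  next
    case False
    have "\<forall>c d. hom_poly n (e - 2) (G2 c d)" unfolding G2_def using hom_poly_pd2 less.prems(1) by blast
    moreover have "normal_free n G2" unfolding G2_def using less.prems(2) by (simp add: normal_free_pd)
    moreover have "normal_equation n G2"
      unfolding G2_def using normal_equation_pd[OF poly_fun_pd normal_equation_pd[OF poly less.prems(3)]]
      using poly by simp
    moreover have "boundary_flat n G2"
      unfolding G2_def using boundary_flat_pd2[OF n4 poly less.prems(2-4)] .
    ultimately show ?thesis using less.IH[of "e - 2" G2] False by simp
  qed
  show ?case
  proof (rule vanish_from_hyperplane[of "G j l" "n - 1"])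
    show "coord_diff (G j l)" "coord_diff (pd (n - 1) (G j l))" using poly by simp_all
    show "pd (n - 1) (pd (n - 1) (G j l)) y = 0" for y using G2_zero unfolding G2_def .
    have "x(n - 1 := 0) \<in> boundary n" unfolding boundary_def by simp
    then show "G j l (x(n - 1 := 0)) = 0" "pd (n - 1) (G j l) (x(n - 1 := 0)) = 0"
      using less.prems(4) j l unfolding boundary_flat_def by auto
  qed
qed

definition divH :: "nat \<Rightarrow> (nat \<Rightarrow> nat \<Rightarrow> (nat \<Rightarrow> real) \<Rightarrow> real) \<Rightarrow> nat \<Rightarrow> (nat \<Rightarrow> real) \<Rightarrow> real"
  where "divH n H l x = (\<Sum>m<n. pd m (H m l) x)"

definition lap :: "nat \<Rightarrow> ((nat \<Rightarrow> real) \<Rightarrow> real) \<Rightarrow> (nat \<Rightarrow> real) \<Rightarrow> real" where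
  "lap n f x = (\<Sum>m<n. pd m (pd m f) x)"

definition div_div :: "nat \<Rightarrow> (nat \<Rightarrow> nat \<Rightarrow> (nat \<Rightarrow> real) \<Rightarrow> real) \<Rightarrow> (nat \<Rightarrow> real) \<Rightarrow> real" where
  "div_div n H x = (\<Sum>m<n. \<Sum>p<n. pd m (pd p (H m p)) x)"

lemma poly_fun_lap [simp]: "poly_fun f \<Longrightarrow> poly_fun (lap n f)"
  unfolding lap_def[abs_def] by simp

lemma pd_lap: "poly_fun f \<Longrightarrow> pd a (lap n f) x = lap n (pd a f) x"
  unfolding lap_def[abs_def] by (simp add: pd_sum pd_comm)

lemma sum_kron: "k < n \<Longrightarrow> (\<Sum>i<n. f i * kron i k) = f k"
  and sum_kron': "k < n \<Longrightarrow> (\<Sum>i<n. f i * kron k i) = f k"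
  by (simp_all add: kron_def if_distrib cong: if_cong)

lemma sum_delta_right: "l < (n::nat) \<Longrightarrow> (\<Sum>k<n. f k * (if l = k then 1 else 0)) = (f l :: real)"
proof -
  assume "l < n"
  have "(\<Sum>k<n. f k * (if l = k then 1 else 0)) = (\<Sum>k<n. if l = k then f k else 0)"
    by (rule sum.cong) auto
  also have "\<dots> = f l" using \<open>l < n\<close> by (subst sum.delta') auto
  finally show ?thesis .
qed

lemma sum_delta_left: "l < (n::nat) \<Longrightarrow> (\<Sum>k<n. (if l = k then 1 else 0) * f k) = (f l :: real)"
  using sum_delta_right[of l n f] by (simp add: mult.commute)

lemma hom_poly_A: "(\<And>i k. hom_poly n e (F i k)) \<Longrightarrow> hom_poly n (e - 2) (A_tensor n F i k)"
  unfolding A_tensor_def[abs_def]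
  by (intro hom_poly_minus hom_poly.add hom_poly_sum hom_poly_pd2 hom_poly_multc hom_poly_divc
      hom_poly_cmult)

lemma hom_poly_Z: "(\<And>i k. hom_poly n e (F i k)) \<Longrightarrow> hom_poly n (e - 2) (Z_tensor n F i j k l)"
  unfolding Z_tensor_def[abs_def]
  by (intro hom_poly_minus hom_poly.add hom_poly_pd2 hom_poly_multc hom_poly_divc hom_poly_cmult
      hom_poly_A)

section \<open>Homogeneous solutions of Z = 0\<close>

text \<open>The hypotheses of the proposition for a tensor H all of whose components are homogeneous of
  the same degree m \<ge> 2, with the half-space conditions already extended to all of R^n.\<close>
locale hom_Z_flat =
  fixes n :: nat and m :: nat and H :: "nat \<Rightarrow> nat \<Rightarrow> (nat \<Rightarrow> real) \<Rightarrow> real"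
  assumes n6: "6 \<le> n" and m2: "2 \<le> m"
    and hom_H: "\<And>i k. hom_poly n m (H i k)"
    and sym_H: "\<And>i k. i < n \<Longrightarrow> k < n \<Longrightarrow> H i k = H k i"
    and trace_H: "\<And>x. (\<Sum>i<n. H i i x) = 0"
    and normal_H: "\<And>i x. i < n \<Longrightarrow> H i (n - 1) x = 0"
    and boundary_H: "\<And>x i. x \<in> boundary n \<Longrightarrow> i < n \<Longrightarrow> (\<Sum>k<n. H i k x * x k) = 0"
    and boundary_pd_H: "\<And>x i k. x \<in> boundary n \<Longrightarrow> i < n \<Longrightarrow> k < n \<Longrightarrow> pd (n - 1) (H i k) x = 0"
    and Z_H: "\<And>x i j k l. i < n \<Longrightarrow> j < n \<Longrightarrow> k < n \<Longrightarrow> l < n \<Longrightarrow> Z_tensor n H i j k l x = 0"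
begin

lemma poly_H [simp]: "poly_fun (H i k)"
  using hom_H hom_poly_poly_fun by blast

lemma poly_A [simp]: "poly_fun (A_tensor n H i k)"
  unfolding A_tensor_def[abs_def] by simp

lemma poly_divH [simp]: "poly_fun (divH n H l)"
  unfolding divH_def[abs_def] by simp

lemma poly_div_div [simp]: "poly_fun (div_div n H)"
  unfolding div_div_def[abs_def] by simp

lemma pd_divH: "pd a (divH n H l) x = (\<Sum>m<n. pd a (pd m (H m l)) x)"
  unfolding divH_def[abs_def] by (simp add: pd_sum)

lemma pd2_divH: "pd a (pd b (divH n H l)) x = (\<Sum>m<n. pd a (pd b (pd m (H m l))) x)"
  unfolding divH_def[abs_def] by (simp add: pd_sum)

lemma A_eq: "i < n \<Longrightarrow> k < n \<Longrightarrow> A_tensor n H i k = (\<lambda>x.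
   pd i (divH n H k) x + pd k (divH n H i) x - lap n (H i k) x
   - (1 / (real n - 1)) * div_div n H x * kron i k)"
proof
  fix x assume ik: "i < n" "k < n"
  have "(\<Sum>m<n. pd m (pd k (H i m)) x) = (\<Sum>m<n. pd k (pd m (H m i)) x)"
    by (rule sum.cong) (auto simp: sym_H ik pd_comm)
  then show "A_tensor n H i k x = pd i (divH n H k) x + pd k (divH n H i) x - lap n (H i k) x
     - (1 / (real n - 1)) * div_div n H x * kron i k"
    unfolding A_tensor_def pd_divH lap_def div_div_def by simp
qed

lemma A_sym: "i < n \<Longrightarrow> k < n \<Longrightarrow> A_tensor n H i k = A_tensor n H k i"
  by (auto simp: A_eq sym_H kron_def fun_eq_iff)

lemma pd_A: "j < n \<Longrightarrow> l < n \<Longrightarrow> pd a (A_tensor n H j l) x =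
   pd a (pd j (divH n H l)) x + pd a (pd l (divH n H j)) x - pd a (lap n (H j l)) x
   - (1 / (real n - 1)) * pd a (div_div n H) x * kron j l"
  by (simp add: A_eq pd_add pd_minus pd_mult pd_div)

lemma sum_pd_divH: "(\<Sum>i<n. pd i (divH n H i) x) = div_div n H x"
proof -
  have "(\<Sum>i<n. pd i (divH n H i) x) = (\<Sum>i<n. \<Sum>p<n. pd i (pd p (H p i)) x)"
    by (simp add: pd_divH)
  also have "\<dots> = (\<Sum>p<n. \<Sum>i<n. pd i (pd p (H p i)) x)" by (rule sum.swap)
  also have "\<dots> = div_div n H x" unfolding div_div_def by (simp add: pd_comm)
  finally show ?thesis .
qed

lemma div_A: "l < n \<Longrightarrow> (\<Sum>i<n. pd i (A_tensor n H i l) x) = (1 - 1 / (real n - 1)) * pd l (div_div n H) x"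
proof -
  assume l: "l < n"
  have "(\<Sum>i<n. pd i (pd l (divH n H i)) x) = pd l (\<lambda>x. \<Sum>i<n. pd i (divH n H i) x) x"
    by (simp add: pd_sum pd_comm)
  also have "\<dots> = pd l (div_div n H) x" by (simp add: sum_pd_divH)
  finally have s2: "(\<Sum>i<n. pd i (pd l (divH n H i)) x) = pd l (div_div n H) x" .
  have "(\<Sum>i<n. pd i (lap n (H i l)) x) = (\<Sum>m<n. \<Sum>i<n. pd m (pd m (pd i (H i l))) x)"
    by (subst sum.swap) (simp add: pd_lap lap_def)
  then have s3: "(\<Sum>i<n. pd i (lap n (H i l)) x) = (\<Sum>i<n. pd i (pd i (divH n H l)) x)"
    by (simp add: pd2_divH)
  have s4: "(\<Sum>i<n. (1 / (real n - 1)) * pd i (div_div n H) x * kron i l)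
      = (1 / (real n - 1)) * pd l (div_div n H) x"
    using sum_kron[OF l, of "\<lambda>i. (1 / (real n - 1)) * pd i (div_div n H) x"] by simp
  show ?thesis using l s2 s3 s4 by (simp add: pd_A sum.distrib sum_subtractf algebra_simps)
qed

lemma div_Z:
  assumes jkl: "j < n" "k < n" "l < n"
  shows "(\<Sum>i<n. pd i (Z_tensor n H i j k l) x) =
     pd k (lap n (H j l)) x - pd l (lap n (H j k)) x
     - pd j (pd k (divH n H l)) x + pd j (pd l (divH n H k)) x
     + (1 / (real n - 2)) * (pd k (A_tensor n H j l) x - pd l (A_tensor n H j k) x
        - (\<Sum>i<n. pd i (A_tensor n H i l) x) * kron j k + (\<Sum>i<n. pd i (A_tensor n H i k) x) * kron j l)"
proof -
  have pd_Z: "pd i (Z_tensor n H i j k l) x =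
    pd i (pd i (pd k (H j l))) x - pd i (pd i (pd l (H j k))) x - pd i (pd j (pd k (H i l))) x
    + pd i (pd j (pd l (H i k))) x
    + (1 / (real n - 2)) * (pd i (A_tensor n H j l) x * kron i k - pd i (A_tensor n H j k) x * kron i l
        - pd i (A_tensor n H i l) x * kron j k + pd i (A_tensor n H i k) x * kron j l)" for i
    unfolding Z_tensor_def[abs_def] by (simp add: pd_add pd_minus pd_mult pd_div)
  have div_term: "(\<Sum>i<n. pd i (pd a (pd b (H i c))) x) = pd a (pd b (divH n H c)) x" for a b c
    unfolding pd2_divH by (intro sum.cong refl) (metis pd_comm poly_fun_pd poly_H)
  have "(\<Sum>i<n. pd i (pd j (pd k (H i l))) x) = pd j (pd k (divH n H l)) x"
    "(\<Sum>i<n. pd i (pd j (pd l (H i k))) x) = pd j (pd l (divH n H k)) x"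
    by (rule div_term)+
  moreover have "(\<Sum>i<n. pd i (pd i (pd k (H j l))) x) = pd k (lap n (H j l)) x"
    "(\<Sum>i<n. pd i (pd i (pd l (H j k))) x) = pd l (lap n (H j k)) x"
    by (simp_all add: pd_lap lap_def)
  moreover have "(\<Sum>i<n. pd i (A_tensor n H j l) x * kron i k) = pd k (A_tensor n H j l) x"
    "(\<Sum>i<n. pd i (A_tensor n H j k) x * kron i l) = pd l (A_tensor n H j k) x"
    using jkl by (simp_all add: sum_kron)
  moreover have "(\<Sum>i<n. pd i (A_tensor n H i l) x * kron j k) = (\<Sum>i<n. pd i (A_tensor n H i l) x) * kron j k"
    "(\<Sum>i<n. pd i (A_tensor n H i k) x * kron j l) = (\<Sum>i<n. pd i (A_tensor n H i k) x) * kron j l"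
    by (simp_all add: sum_distrib_right)
  ultimately show ?thesis
    unfolding pd_Z by (simp add: sum.distrib sum_subtractf sum_divide_distrib[symmetric])
qed

text \<open>Cotton symmetry \<partial>_k A_jl = \<partial>_l A_jk: substituting the formula for A into div Z = 0 leaves
  (1/(n-2) - 1) (\<partial>_k A_jl - \<partial>_l A_jk) = 0.\<close>
lemma cotton:
  assumes jkl: "j < n" "k < n" "l < n"
  shows "pd k (A_tensor n H j l) x = pd l (A_tensor n H j k) x"
proof -
  define c where "c = 1 / (real n - 1)"
  define c2 where "c2 = 1 / (real n - 2)"
  define C where "C = pd k (A_tensor n H j l) x - pd l (A_tensor n H j k) x"
  define K where "K = pd k (div_div n H) x * kron j l - pd l (div_div n H) x * kron j k"
  have n6': "real n \<ge> 6" using n6 by simp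
  have cc: "c2 * (1 - c) = c" and c21: "c2 \<noteq> 1"
    unfolding c_def c2_def using n6' by (simp_all add: field_simps)
  have "\<forall>i<n. Z_tensor n H i j k l = (\<lambda>x. 0)" using Z_H jkl by auto
  then have "(\<Sum>i<n. pd i (Z_tensor n H i j k l) x) = 0" by simp
  then have "0 = pd k (lap n (H j l)) x - pd l (lap n (H j k)) x
     - pd j (pd k (divH n H l)) x + pd j (pd l (divH n H k)) x + c2 * (C + (1 - c) * K)"
    unfolding div_Z[OF jkl] div_A[OF jkl(2)] div_A[OF jkl(3)] c_def c2_def C_def K_def
    by (simp add: algebra_simps)
  moreover have "pd k (lap n (H j l)) x - pd l (lap n (H j k)) x
     - pd j (pd k (divH n H l)) x + pd j (pd l (divH n H k)) x = - C - c * K"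
    unfolding C_def K_def c_def using jkl by (simp add: pd_A pd_comm[of "divH n H _"] algebra_simps)
  ultimately have "0 = (c2 - 1) * C + (c2 * (1 - c) - c) * K" by (simp add: algebra_simps)
  then have "C = 0" using cc c21 by simp
  then show ?thesis unfolding C_def by simp
qed

end

lemma contract_Z:
  "(\<Sum>i<n. \<Sum>k<n. x i * x k * Z_tensor n H i j k l x) =
     (\<Sum>i<n. \<Sum>k<n. x i * x k * pd i (pd k (H j l)) x) - (\<Sum>i<n. \<Sum>k<n. x i * x k * pd i (pd l (H j k)) x)
     - (\<Sum>i<n. \<Sum>k<n. x i * x k * pd j (pd k (H i l)) x) + (\<Sum>i<n. \<Sum>k<n. x i * x k * pd j (pd l (H i k)) x)
     + (1 / (real n - 2)) * ((\<Sum>i<n. \<Sum>k<n. x i * x k * (A_tensor n H j l x * kron i k))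
       - (\<Sum>i<n. \<Sum>k<n. x i * x k * (A_tensor n H j k x * kron i l))
       - (\<Sum>i<n. \<Sum>k<n. x i * x k * (A_tensor n H i l x * kron j k))
       + (\<Sum>i<n. \<Sum>k<n. x i * x k * (A_tensor n H i k x * kron j l)))"
  unfolding Z_tensor_def
  by (simp add: distrib_left right_diff_distrib sum.distrib sum_subtractf sum_distrib_left mult.left_commute)

lemma double_sum_factor:
  "(\<Sum>i<n. \<Sum>k<n. x i * x k * F i k) = (\<Sum>i<n. x i * (\<Sum>k<n. x k * F i k))" for F :: "nat \<Rightarrow> nat \<Rightarrow> real"
  by (simp add: sum_distrib_left mult.assoc)

text \<open>Radial contraction v_j = x_k A_jk and the quadratic form \<phi> = x_i x_k A_ik.\<close>
definition radial_A :: "nat \<Rightarrow> (nat \<Rightarrow> nat \<Rightarrow> (nat \<Rightarrow> real) \<Rightarrow> real) \<Rightarrow> nat \<Rightarrow> (nat \<Rightarrow> real) \<Rightarrow> real"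
  where "radial_A n H j x = (\<Sum>k<n. x k * A_tensor n H j k x)"

definition quad_A :: "nat \<Rightarrow> (nat \<Rightarrow> nat \<Rightarrow> (nat \<Rightarrow> real) \<Rightarrow> real) \<Rightarrow> (nat \<Rightarrow> real) \<Rightarrow> real" where
  "quad_A n H x = (\<Sum>i<n. \<Sum>k<n. x i * x k * A_tensor n H i k x)"

context hom_Z_flat
begin

lemma hom_A: "hom_poly n (m - 2) (A_tensor n H i k)"
  by (rule hom_poly_A[OF hom_H])

lemma euler_H: "(\<Sum>a<n. x a * pd a (H j l) x) = real m * H j l x"
  using euler_identity[OF hom_H] by simp

lemma euler_pd_H: "(\<Sum>a<n. x a * pd a (pd i (H j l)) x) = (real m - 1) * pd i (H j l) x"
  using euler_identity[OF hom_poly_pd[OF hom_H], of x i j l] m2 by simp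

lemma euler_A: "(\<Sum>a<n. x a * pd a (A_tensor n H i k) x) = (real m - 2) * A_tensor n H i k x"
  using euler_identity[OF hom_A, of x i k] m2 by simp

lemma boundary_radial_pd_H:
  assumes x: "x \<in> boundary n" and j: "j < n" and l: "l < n - 1"
  shows "(\<Sum>k<n. x k * pd l (H j k) x) = - H j l x"
proof -
  have "pd l (\<lambda>y. \<Sum>k<n. H j k y * y k) x = 0"
    by (rule pd_tangential_zero) (use boundary_H j x l in auto)
  moreover have "pd l (\<lambda>y. \<Sum>k<n. H j k y * y k) x
      = (\<Sum>k<n. pd l (H j k) x * x k + H j k x * (if l = k then 1 else 0))"
    by (simp add: pd_sum pd_mult)
  moreover have "\<dots> = (\<Sum>k<n. x k * pd l (H j k) x) + H j l x"
    using l by (simp add: sum.distrib sum_delta_right mult.commute)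
  ultimately show ?thesis by simp
qed

lemma boundary_radial_pd2_H:
  assumes x: "x \<in> boundary n" and i: "i < n" and j: "j < n - 1" and l: "l < n - 1"
  shows "(\<Sum>k<n. x k * pd j (pd l (H i k)) x) = - pd l (H i j) x - pd j (H i l) x"
proof -
  have "pd j (\<lambda>y. (\<Sum>k<n. y k * pd l (H i k) y) + H i l y) x = 0"
    by (rule pd_tangential_zero) (use boundary_radial_pd_H i x l j in auto)
  moreover have "pd j (\<lambda>y. (\<Sum>k<n. y k * pd l (H i k) y) + H i l y) x
     = (\<Sum>k<n. (if j = k then 1 else 0) * pd l (H i k) x + x k * pd j (pd l (H i k)) x) + pd j (H i l) x"
    by (simp add: pd_sum pd_mult pd_add)
  moreover have "(\<Sum>k<n. (if j = k then 1 else 0) * pd l (H i k) x + x k * pd j (pd l (H i k)) x)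
      = pd l (H i j) x + (\<Sum>k<n. x k * pd j (pd l (H i k)) x)"
    using j by (simp add: sum.distrib sum_delta_left)
  ultimately show ?thesis by simp
qed

lemma contract_hess_H: "(\<Sum>i<n. \<Sum>k<n. x i * x k * pd i (pd k (H j l)) x) = real m * (real m - 1) * H j l x"
proof -
  have "(\<Sum>k<n. x k * pd i (pd k (H j l)) x) = (real m - 1) * pd i (H j l) x" for i
    using euler_pd_H[of x i j l] by (simp add: pd_comm)
  then have "(\<Sum>i<n. \<Sum>k<n. x i * x k * pd i (pd k (H j l)) x) = (\<Sum>i<n. x i * ((real m - 1) * pd i (H j l) x))"
    by (simp add: double_sum_factor)
  also have "\<dots> = (real m - 1) * (\<Sum>i<n. x i * pd i (H j l) x)"
    by (simp add: sum_distrib_left algebra_simps)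
  finally show ?thesis using euler_H[of x j l] by simp
qed

lemma contract_mixed_H:
  assumes x: "x \<in> boundary n" and j: "j < n" and l: "l < n - 1"
  shows "(\<Sum>i<n. \<Sum>k<n. x i * x k * pd i (pd l (H j k)) x) = - (real m - 1) * H j l x"
proof -
  have "(\<Sum>i<n. \<Sum>k<n. x i * x k * pd i (pd l (H j k)) x) = (\<Sum>k<n. x k * (\<Sum>i<n. x i * pd i (pd l (H j k)) x))"
    by (subst sum.swap) (simp add: sum_distrib_left algebra_simps)
  also have "\<dots> = (real m - 1) * (\<Sum>k<n. x k * pd l (H j k) x)"
    by (simp add: euler_pd_H sum_distrib_left algebra_simps)
  finally show ?thesis using boundary_radial_pd_H[OF x j l] by (simp add: algebra_simps)
qed

lemma contract_mixed_H':
  assumes x: "x \<in> boundary n" and j: "j < n - 1" and l: "l < n"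
  shows "(\<Sum>i<n. \<Sum>k<n. x i * x k * pd j (pd k (H i l)) x) = - (real m - 1) * H j l x"
proof -
  have "(\<Sum>k<n. x k * pd j (pd k (H i l)) x) = (real m - 1) * pd j (H l i) x" if "i < n" for i
    using euler_pd_H[of x j i l] sym_H[OF that l] by (simp add: pd_comm)
  then have "(\<Sum>i<n. \<Sum>k<n. x i * x k * pd j (pd k (H i l)) x) = (\<Sum>i<n. x i * ((real m - 1) * pd j (H l i) x))"
    by (simp add: double_sum_factor)
  also have "\<dots> = (real m - 1) * (\<Sum>i<n. x i * pd j (H l i) x)"
    by (simp add: sum_distrib_left algebra_simps)
  finally show ?thesis
    using boundary_radial_pd_H[OF x l j] sym_H[of l j] j l by (simp add: algebra_simps)
qed

lemma contract_tan_hess_H: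
  assumes x: "x \<in> boundary n" and j: "j < n - 1" and l: "l < n - 1"
  shows "(\<Sum>i<n. \<Sum>k<n. x i * x k * pd j (pd l (H i k)) x) = 2 * H j l x"
proof -
  have "(\<Sum>k<n. x k * pd j (pd l (H i k)) x) = - pd l (H j i) x - pd j (H l i) x" if "i < n" for i
    using boundary_radial_pd2_H[OF x that j l] sym_H[OF that, of j] sym_H[OF that, of l] j l by simp
  then have "(\<Sum>i<n. \<Sum>k<n. x i * x k * pd j (pd l (H i k)) x)
      = (\<Sum>i<n. x i * (- pd l (H j i) x - pd j (H l i) x))"
    by (simp add: double_sum_factor)
  also have "\<dots> = - (\<Sum>i<n. x i * pd l (H j i) x) - (\<Sum>i<n. x i * pd j (H l i) x)"
    by (simp add: sum_subtractf sum_negf algebra_simps)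
  also have "\<dots> = H j l x + H l j x"
    using boundary_radial_pd_H[OF x _ l, of j] boundary_radial_pd_H[OF x _ j, of l] j l by simp
  finally show ?thesis using sym_H[of l j] j l by simp
qed

lemma contract_kron_ik: "(\<Sum>i<n. \<Sum>k<n. x i * x k * (a * kron i k)) = norm_sq n x * a"
proof -
  have "(\<Sum>k<n. x k * (a * kron i k)) = a * x i" if "i < n" for i
    using sum_kron'[OF that, of "\<lambda>k. x k * a"] by (simp add: algebra_simps)
  then have "(\<Sum>i<n. \<Sum>k<n. x i * x k * (a * kron i k)) = (\<Sum>i<n. x i * (a * x i))"
    by (simp add: double_sum_factor)
  then show ?thesis by (simp add: norm_sq_def sum_distrib_left algebra_simps)
qed

lemma contract_A_kron_il:
  "l < n \<Longrightarrow> (\<Sum>i<n. \<Sum>k<n. x i * x k * (A_tensor n H j k x * kron i l)) = x l * radial_A n H j x"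
  using sum_kron[of l n "\<lambda>i. x i * radial_A n H j x"]
  unfolding radial_A_def by (simp add: sum_distrib_left sum_distrib_right algebra_simps)

lemma contract_A_kron_jk:
  assumes j: "j < n" and l: "l < n"
  shows "(\<Sum>i<n. \<Sum>k<n. x i * x k * (A_tensor n H i l x * kron j k)) = x j * radial_A n H l x"
proof -
  have "(\<Sum>k<n. x k * (A_tensor n H i l x * kron j k)) = x j * A_tensor n H i l x" for i
    using sum_kron'[OF j, of "\<lambda>k. x k * A_tensor n H i l x"] by (simp add: algebra_simps)
  then have "(\<Sum>i<n. \<Sum>k<n. x i * x k * (A_tensor n H i l x * kron j k))
      = (\<Sum>i<n. x i * (x j * A_tensor n H i l x))"
    by (simp add: double_sum_factor)
  also have "\<dots> = x j * radial_A n H l x" unfolding radial_A_def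
    using l by (simp add: sum_distrib_left algebra_simps A_sym)
  finally show ?thesis .
qed

lemma contract_A_kron_jl:
  "(\<Sum>i<n. \<Sum>k<n. x i * x k * (A_tensor n H i k x * kron j l)) = kron j l * quad_A n H x"
  unfolding quad_A_def by (simp add: sum_distrib_left sum_distrib_right algebra_simps)

lemma contracted_Z_boundary:
  assumes x: "x \<in> boundary n" and j: "j < n - 1" and l: "l < n - 1"
  shows "real m * (real m + 1) * H j l x + (1 / (real n - 2)) * (norm_sq n x * A_tensor n H j l x
     - x l * radial_A n H j x - x j * radial_A n H l x + kron j l * quad_A n H x) = 0"
proof -
  have jn: "j < n" and ln: "l < n" using j l by auto
  have "(\<Sum>i<n. \<Sum>k<n. x i * x k * Z_tensor n H i j k l x) = 0" using Z_H jn ln by simp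
  then show ?thesis
    unfolding contract_Z contract_hess_H contract_mixed_H[OF x jn l] contract_mixed_H'[OF x j ln]
      contract_tan_hess_H[OF x j l] contract_kron_ik contract_A_kron_il[OF ln]
      contract_A_kron_jk[OF jn ln] contract_A_kron_jl
    by (simp add: algebra_simps)
qed

text \<open>Derivatives of \<phi>: by the Cotton symmetry and Euler's identity, \<nabla>\<phi> = m v and
  \<nabla>^2 \<phi> = m (m - 1) A.\<close>
lemma hom_quad_A: "hom_poly n m (quad_A n H)"
proof -
  have "hom_poly n m (\<lambda>x. x i * x k * A_tensor n H i k x)" if "i < n" "k < n" for i k
  proof -
    have "hom_poly n (1 + 1 + (m - 2)) (\<lambda>x. x i * x k * A_tensor n H i k x)"
      by (intro hom_poly.mult hom_poly.coord hom_A that)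
    moreover have "1 + 1 + (m - 2) = m" using m2 by simp
    ultimately show ?thesis by simp
  qed
  then show ?thesis unfolding quad_A_def[abs_def] by (intro hom_poly_sum) auto
qed

lemma pd_radial_A:
  assumes b: "b < n" and d: "d < n"
  shows "pd d (radial_A n H b) x = (real m - 1) * A_tensor n H b d x"
proof -
  have "pd d (radial_A n H b) x
      = (\<Sum>k<n. (if d = k then 1 else 0) * A_tensor n H b k x + x k * pd d (A_tensor n H b k) x)"
    unfolding radial_A_def[abs_def] by (simp add: pd_sum pd_mult)
  also have "\<dots> = A_tensor n H b d x + (\<Sum>k<n. x k * pd k (A_tensor n H b d) x)"
    using d b cotton[OF b d] by (simp add: sum.distrib sum_delta_left)
  also have "\<dots> = (real m - 1) * A_tensor n H b d x" by (simp add: euler_A algebra_simps)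
  finally show ?thesis .
qed

lemma pd_quad_A:
  assumes b: "b < n"
  shows "pd b (quad_A n H) x = real m * radial_A n H b x"
proof -
  have cot: "pd b (A_tensor n H i k) x = pd i (A_tensor n H b k) x" if "i < n" "k < n" for i k
    using cotton[OF that(2) b that(1)] A_sym[OF that] A_sym[OF that(2) b] by simp
  have "pd b (quad_A n H) x = (\<Sum>i<n. \<Sum>k<n.
      ((if b = i then 1 else 0) * x k + x i * (if b = k then 1 else 0)) * A_tensor n H i k x
      + x i * x k * pd b (A_tensor n H i k) x)"
    unfolding quad_A_def[abs_def] by (simp add: pd_sum pd_mult)
  also have "\<dots> = (\<Sum>i<n. (if b = i then 1 else 0) * (\<Sum>k<n. x k * A_tensor n H i k x))
       + (\<Sum>i<n. x i * (\<Sum>k<n. (if b = k then 1 else 0) * A_tensor n H i k x))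
       + (\<Sum>k<n. x k * (\<Sum>i<n. x i * pd b (A_tensor n H i k) x))"
    by (simp add: sum.distrib sum_distrib_left algebra_simps, subst (2) sum.swap, simp add: algebra_simps)
  also have "\<dots> = radial_A n H b x + radial_A n H b x
      + (\<Sum>k<n. x k * (\<Sum>i<n. x i * pd i (A_tensor n H b k) x))"
  proof -
    have "(\<Sum>i<n. (if b = i then 1 else 0) * (\<Sum>k<n. x k * A_tensor n H i k x)) = radial_A n H b x"
      using b by (simp add: sum_delta_left radial_A_def)
    moreover have "(\<Sum>i<n. x i * (\<Sum>k<n. (if b = k then 1 else 0) * A_tensor n H i k x)) = radial_A n H b x"
      using b by (simp add: sum_delta_left radial_A_def A_sym)
    moreover have "(\<Sum>k<n. x k * (\<Sum>i<n. x i * pd b (A_tensor n H i k) x))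
        = (\<Sum>k<n. x k * (\<Sum>i<n. x i * pd i (A_tensor n H b k) x))"
      by (intro sum.cong refl) (simp add: cot)
    ultimately show ?thesis by simp
  qed
  also have "(\<Sum>k<n. x k * (\<Sum>i<n. x i * pd i (A_tensor n H b k) x)) = (real m - 2) * radial_A n H b x"
    by (simp add: euler_A radial_A_def sum_distrib_left algebra_simps)
  finally show ?thesis by (simp add: algebra_simps)
qed

lemma hess_quad_A: "b < n \<Longrightarrow> d < n \<Longrightarrow> pd d (pd b (quad_A n H)) x = real m * (real m - 1) * A_tensor n H b d x"
proof -
  assume b: "b < n" and d: "d < n"
  have "pd b (quad_A n H) = (\<lambda>x. real m * radial_A n H b x)" using pd_quad_A[OF b] by auto
  moreover have "coord_diff (radial_A n H b)" unfolding radial_A_def[abs_def] by simp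
  ultimately show ?thesis using pd_radial_A[OF b d] by (simp add: pd_cmult)
qed

text \<open>Tracing contracted_Z_boundary over tangential j = l, using that H is trace-free and
  H_{nn} = 0: (n - 3) \<phi> = - |x|^2 tr_T A on the boundary.\<close>
lemma quad_A_trace:
  assumes x: "x \<in> boundary n"
  shows "(real n - 3) * quad_A n H x = - norm_sq n x * (\<Sum>j<n - 1. A_tensor n H j j x)"
proof -
  have n1: "1 \<le> n" using n6 by simp
  have trace_tan: "(\<Sum>j<n - 1. H j j x) = 0"
    using trace_H[of x] sum_split_last[OF n1, of "\<lambda>j. H j j x"] normal_H[of "n - 1" x] n1 by simp
  have "(\<Sum>j<n. x j * radial_A n H j x) = quad_A n H x"
    unfolding radial_A_def quad_A_def by (simp add: sum_distrib_left algebra_simps)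
  then have radial: "(\<Sum>j<n - 1. x j * radial_A n H j x) = quad_A n H x"
    using sum_split_last[OF n1, of "\<lambda>j. x j * radial_A n H j x"] boundary_normal_coord[OF x] by simp
  have kr: "(\<Sum>j<n - 1. kron j j * quad_A n H x) = (real n - 1) * quad_A n H x"
    using n1 by (simp add: kron_def)
  have "(\<Sum>j<n - 1. real m * (real m + 1) * H j j x + (1 / (real n - 2)) * (norm_sq n x * A_tensor n H j j x
     - x j * radial_A n H j x - x j * radial_A n H j x + kron j j * quad_A n H x)) = 0"
  proof (rule sum.neutral, rule ballI)
    fix j assume "j \<in> {..<n - 1}"
    then show "real m * (real m + 1) * H j j x + (1 / (real n - 2)) * (norm_sq n x * A_tensor n H j j x
     - x j * radial_A n H j x - x j * radial_A n H j x + kron j j * quad_A n H x) = 0"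
      using contracted_Z_boundary[OF x, of j j] by simp
  qed
  then have "real m * (real m + 1) * (\<Sum>j<n - 1. H j j x) + (1 / (real n - 2)) *
     (norm_sq n x * (\<Sum>j<n - 1. A_tensor n H j j x) - 2 * (\<Sum>j<n - 1. x j * radial_A n H j x)
      + (\<Sum>j<n - 1. kron j j * quad_A n H x)) = 0"
    by (simp add: sum.distrib sum_subtractf sum_distrib_left algebra_simps)
  then have "norm_sq n x * (\<Sum>j<n - 1. A_tensor n H j j x) - 2 * quad_A n H x + (real n - 1) * quad_A n H x = 0"
    using trace_tan radial kr n6 by simp
  then show ?thesis by (simp add: algebra_simps)
qed

text \<open>Hence \<phi> = \<mu> |x|^2 \<Delta>_T \<phi> with \<mu> = -1/((n-3) m (m-1)) \<le> 0, and \<phi> vanishes on the boundary.\<close>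
lemma quad_A_boundary_zero: "x \<in> boundary n \<Longrightarrow> quad_A n H x = 0"
proof (rule boundary_vanishing[OF _ hom_quad_A])
  define M where "M = real m * (real m - 1)"
  define \<mu> where "\<mu> = - 1 / ((real n - 3) * M)"
  have M: "M > 0" and n3: "real n - 3 > 0" unfolding M_def using m2 n6 by simp_all
  then show "\<mu> \<le> 0" unfolding \<mu>_def by (simp add: divide_nonpos_pos)
  show "1 \<le> n" using n6 by simp
  show "\<forall>x\<in>boundary n. quad_A n H x = \<mu> * norm_sq n x * lap_tan n (quad_A n H) x"
  proof
    fix x assume x: "x \<in> boundary n"
    define \<tau> where "\<tau> = (\<Sum>j<n - 1. A_tensor n H j j x)"
    have lap: "lap_tan n (quad_A n H) x = M * \<tau>"
      unfolding lap_tan_def \<tau>_def M_def by (simp add: hess_quad_A sum_distrib_left)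
    have "quad_A n H x = - norm_sq n x * \<tau> / (real n - 3)"
      using quad_A_trace[OF x] n3 unfolding \<tau>_def by (simp add: field_simps)
    also have "\<dots> = \<mu> * norm_sq n x * (M * \<tau>)"
      using M n3 unfolding \<mu>_def by (simp add: field_simps)
    finally show "quad_A n H x = \<mu> * norm_sq n x * lap_tan n (quad_A n H) x" unfolding lap .
  qed
qed

lemma A_boundary_zero:
  assumes x: "x \<in> boundary n" and b: "b < n - 1" and d: "d < n - 1"
  shows "A_tensor n H b d x = 0"
proof -
  have "pd d (pd b (quad_A n H)) x = 0"
    using pd2_tangential_zero[OF _ d b x] quad_A_boundary_zero by blast
  then have "real m * (real m - 1) * A_tensor n H b d x = 0" using hess_quad_A[of b d x] b d by simp
  then show ?thesis using m2 by simp
qed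

lemma radial_A_boundary_zero:
  assumes x: "x \<in> boundary n" and j: "j < n - 1"
  shows "radial_A n H j x = 0"
proof -
  have n1: "1 \<le> n" using n6 by simp
  have "radial_A n H j x = (\<Sum>k<n - 1. x k * A_tensor n H j k x) + x (n - 1) * A_tensor n H j (n - 1) x"
    unfolding radial_A_def by (rule sum_split_last[OF n1])
  then show ?thesis using A_boundary_zero[OF x j] boundary_normal_coord[OF x] by simp
qed

text \<open>With A, v and \<phi> gone, contracted_Z_boundary leaves m (m + 1) H_jl = 0.\<close>
lemma H_boundary_zero:
  assumes x: "x \<in> boundary n" and j: "j < n - 1" and l: "l < n - 1"
  shows "H j l x = 0"
proof -
  have "real m * (real m + 1) * H j l x = 0"
    using contracted_Z_boundary[OF x j l] A_boundary_zero[OF x j l] radial_A_boundary_zero[OF x j]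
      radial_A_boundary_zero[OF x l] quad_A_boundary_zero[OF x] by simp
  then show ?thesis using m2 by simp
qed

lemma normal_free_H: "normal_free n H"
  unfolding normal_free_def
proof (intro allI impI conjI)
  fix c assume c: "c < n"
  show "H c (n - 1) = (\<lambda>x. 0)" using normal_H[OF c] by auto
  then show "H (n - 1) c = (\<lambda>x. 0)" using sym_H[OF _ c] n6 by simp
qed

text \<open>The component Z_{jnln} = 0 of the hypothesis, with H_{cn} = 0, is the normal equation.\<close>
lemma normal_equation_H: "normal_equation n H"
  unfolding normal_equation_def
proof (intro allI impI)
  fix j l x assume j: "j < n - 1" and l: "l < n - 1"
  define \<nu> where "\<nu> = n - 1"
  have n1: "1 \<le> n" and nu: "\<nu> < n" and jn: "j < n" and ln: "l < n" using n6 j l unfolding \<nu>_def by auto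
  define c where "c = 1 / (real n - 1)"
  define Q where "Q = pd \<nu> (pd \<nu> (H j l)) x"
  define P where "P = pd j (divH n H l) x + pd l (divH n H j) x"
  define L where "L = (\<Sum>m<n - 1. pd m (pd m (H j l)) x)"
  define D where "D = div_div n H x"
  have H0: "H \<nu> \<nu> = (\<lambda>x. 0)" "H \<nu> l = (\<lambda>x. 0)" "H j \<nu> = (\<lambda>x. 0)" "divH n H \<nu> = (\<lambda>x. 0)"
    using normal_free_H nu ln jn unfolding normal_free_def \<nu>_def divH_def[abs_def] by auto
  have kron0: "kron j \<nu> = 0" "kron \<nu> l = 0" "kron \<nu> \<nu> = 1" using j l unfolding kron_def \<nu>_def by auto
  have A_nn: "A_tensor n H \<nu> \<nu> x = - c * D"
    using A_eq[OF nu nu] H0 kron0 unfolding c_def D_def by (simp add: lap_def)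
  have "lap n (H j l) x = L + Q"
    unfolding lap_def L_def Q_def \<nu>_def by (rule sum_split_last[OF n1])
  then have A_jl: "A_tensor n H j l x = P - (L + Q) - c * D * kron j l"
    using A_eq[OF jn ln] unfolding P_def c_def D_def by simp
  have "Z_tensor n H j \<nu> l \<nu> x = Q + (1 / (real n - 2)) * (A_tensor n H \<nu> \<nu> x * kron j l + A_tensor n H j l x)"
    unfolding Z_tensor_def Q_def using H0 kron0 by simp
  then have "Q + (1 / (real n - 2)) * (- c * D * kron j l + (P - (L + Q) - c * D * kron j l)) = 0"
    using Z_H[OF jn nu ln nu] A_nn A_jl by simp
  then have "(real n - 2) * Q + (- c * D * kron j l + (P - (L + Q) - c * D * kron j l)) = 0"
    using n6 by (simp add: field_simps)
  moreover have "tan_rhs n H j l x = P - L - 2 * c * D * kron j l"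
    unfolding tan_rhs_def P_def L_def D_def c_def div_div_def by (simp add: pd_divH)
  ultimately show "(real n - 3) * pd (n - 1) (pd (n - 1) (H j l)) x = - tan_rhs n H j l x"
    unfolding Q_def \<nu>_def by (simp add: algebra_simps)
qed

lemma boundary_flat_H: "boundary_flat n H"
  unfolding boundary_flat_def
proof (intro allI impI ballI conjI)
  fix c d x assume c: "c < n" and d: "d < n" and x: "x \<in> boundary n"
  show "pd (n - 1) (H c d) x = 0" using boundary_pd_H c d x by simp
  show "H c d x = 0"
  proof (cases "c = n - 1 \<or> d = n - 1")
    case True then show ?thesis using normal_free_H c d unfolding normal_free_def by auto
  next
    case False
    then have "c < n - 1" "d < n - 1" using c d by auto
    then show ?thesis using H_boundary_zero[OF x] by simp
  qed
qed

theorem H_tangential_zero: "j < n - 1 \<Longrightarrow> l < n - 1 \<Longrightarrow> H j l x = 0"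
  using interior_vanishing[of n m H] n6 hom_H normal_free_H normal_equation_H boundary_flat_H by simp

end

section \<open>Reduction to homogeneous components\<close>

lemma scale_half_space: "x \<in> half_space n \<Longrightarrow> s > 0 \<Longrightarrow> scale s x \<in> half_space n"
  unfolding half_space_def scale_def by simp

lemma scale_boundary: "x \<in> boundary n \<Longrightarrow> s > 0 \<Longrightarrow> scale s x \<in> boundary n"
  unfolding boundary_def scale_def by simp

lemma Z_cong:
  assumes eq: "\<And>a b. a < n \<Longrightarrow> b < n \<Longrightarrow> H a b = H' a b"
    and "i < n" "j < n" "k < n" "l < n"
  shows "Z_tensor n H i j k l x = Z_tensor n H' i j k l x"
proof -
  have "A_tensor n H a b y = A_tensor n H' a b y" if "a < n" "b < n" for a b y
    unfolding A_tensor_def using eq that by (intro arg_cong2[where f = "(-)"] arg_cong2[where f = "(+)"]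
      arg_cong2[where f = "(*)"] sum.cong refl) auto
  then show ?thesis unfolding Z_tensor_def using assms by simp
qed

lemma A_sum:
  assumes "finite E" and poly: "\<And>e i k. poly_fun (F e i k)"
  shows "A_tensor n (\<lambda>i k x. \<Sum>e\<in>E. F e i k x) i k x = (\<Sum>e\<in>E. A_tensor n (F e) i k x)"
proof -
  have pd2: "pd a (pd b (\<lambda>x. \<Sum>e\<in>E. F e c d x)) y = (\<Sum>e\<in>E. pd a (pd b (F e c d)) y)" for a b c d y
    using poly by (simp add: pd_sum)
  have swap: "(\<Sum>m<n. \<Sum>e\<in>E. f m e) = (\<Sum>e\<in>E. \<Sum>m<n. f m e)" for f :: "nat \<Rightarrow> _ \<Rightarrow> real"
    by (rule sum.swap)
  show ?thesis unfolding A_tensor_def pd2 swap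
    by (simp add: swap sum.distrib sum_subtractf sum_distrib_left sum_distrib_right sum_divide_distrib)
qed

lemma Z_sum:
  assumes "finite E" and poly: "\<And>e i k. poly_fun (F e i k)"
  shows "Z_tensor n (\<lambda>i k x. \<Sum>e\<in>E. F e i k x) i j k l x = (\<Sum>e\<in>E. Z_tensor n (F e) i j k l x)"
proof -
  have pd2: "pd a (pd b (\<lambda>x. \<Sum>e\<in>E. F e c d x)) y = (\<Sum>e\<in>E. pd a (pd b (F e c d)) y)" for a b c d y
    using poly by (simp add: pd_sum)
  show ?thesis unfolding Z_tensor_def pd2 A_sum[OF assms]
    by (simp add: sum.distrib sum_subtractf sum_distrib_left sum_distrib_right sum_divide_distrib
        diff_divide_distrib add_divide_distrib)
qed

locale hom_decomposition =
  fixes n :: nat and E :: "nat set" and G :: "nat \<Rightarrow> nat \<Rightarrow> nat \<Rightarrow> (nat \<Rightarrow> real) \<Rightarrow> real"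
    and H :: "nat \<Rightarrow> nat \<Rightarrow> (nat \<Rightarrow> real) \<Rightarrow> real"
  assumes finite_E: "finite E" and deg_E: "\<And>e. e \<in> E \<Longrightarrow> 2 \<le> e"
    and hom_G: "\<And>e i k. hom_poly n e (G e i k)"
    and H_sum: "\<And>i k x. i < n \<Longrightarrow> k < n \<Longrightarrow> H i k x = (\<Sum>e\<in>E. G e i k x)"
begin

text \<open>Each hypothesis of the proposition is linear in H; rewriting it as a sum over E and
  separating degrees (the degrees e, e + 1, e - 1, e - 2 are distinct for distinct e \<in> E)
  transfers it to every component.\<close>
lemma inj_degree: "inj_on (\<lambda>e. e) E"
  and inj_degree_up: "inj_on (\<lambda>e. e + 1) E"
  by (simp_all add: inj_on_def)

lemma inj_degree_down:
  assumes "c \<le> 2" shows "inj_on (\<lambda>e. e - c) E"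
proof (rule inj_onI)
  fix a b assume "a \<in> E" "b \<in> E" "a - c = b - c"
  then show "a = b" using deg_E[of a] deg_E[of b] assms by arith
qed

lemma poly_G [simp]: "poly_fun (G e i k)"
  using hom_G hom_poly_poly_fun by blast

lemma sym_G:
  assumes "\<forall>i<n. \<forall>k<n. \<forall>x. H i k x = H k i x" and "e \<in> E" "i < n" "k < n"
  shows "G e i k = G e k i"
proof
  fix x
  have "(\<lambda>e x. G e i k x - G e k i x) e x = 0"
  proof (rule hom_components_vanish[where g = "\<lambda>e x. G e i k x - G e k i x",
        OF finite_E inj_degree _ _ _ \<open>e \<in> E\<close> UNIV_I])
    show "hom_poly n e' (\<lambda>x. G e' i k x - G e' k i x)" for e' by (intro hom_poly_minus hom_G)
    show "(\<Sum>e\<in>E. G e i k x - G e k i x) = 0" for x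
      using H_sum[OF \<open>i < n\<close> \<open>k < n\<close>] H_sum[OF \<open>k < n\<close> \<open>i < n\<close>] assms(1) \<open>i < n\<close> \<open>k < n\<close>
      by (simp add: sum_subtractf)
  qed simp
  then show "G e i k x = G e k i x" by simp
qed

lemma trace_G:
  assumes "\<forall>x. (\<Sum>i<n. H i i x) = 0" and "e \<in> E"
  shows "(\<Sum>i<n. G e i i x) = 0"
proof -
  have "(\<lambda>e x. \<Sum>i<n. G e i i x) e x = 0"
  proof (rule hom_components_vanish[where g = "\<lambda>e x. \<Sum>i<n. G e i i x",
        OF finite_E inj_degree _ _ _ \<open>e \<in> E\<close> UNIV_I])
    show "hom_poly n e' (\<lambda>x. \<Sum>i<n. G e' i i x)" for e' by (intro hom_poly_sum hom_G)
    show "(\<Sum>e\<in>E. \<Sum>i<n. G e i i x) = 0" for x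
      using assms(1) H_sum by (simp add: sum.swap[of _ E])
  qed simp
  then show ?thesis by simp
qed

lemma normal_G:
  assumes "\<forall>x\<in>half_space n. \<forall>i<n. H i (n - 1) x = 0" and "1 \<le> n" "e \<in> E" "i < n"
  shows "G e i (n - 1) x = 0"
proof (rule hom_poly_vanish_from_half_space[OF hom_G[of e i "n - 1"]], intro ballI)
  fix y assume y: "y \<in> half_space n"
  show "G e i (n - 1) y = 0"
  proof (rule hom_components_vanish[where g = "\<lambda>e. G e i (n - 1)",
        OF finite_E inj_degree _ scale_half_space _ \<open>e \<in> E\<close> y])
    show "(\<Sum>e\<in>E. G e i (n - 1) x) = 0" if "x \<in> half_space n" for x
      using assms(1) H_sum[OF \<open>i < n\<close>, of "n - 1" x] that \<open>i < n\<close> \<open>1 \<le> n\<close> by simp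
  qed (rule hom_G)
qed

lemma boundary_G:
  assumes "\<forall>x\<in>boundary n. \<forall>i<n. (\<Sum>k<n. H i k x * x k) = 0" and "e \<in> E" "i < n" "x \<in> boundary n"
  shows "(\<Sum>k<n. G e i k x * x k) = 0"
proof -
  have "(\<lambda>e x. \<Sum>k<n. G e i k x * x k) e x = 0"
  proof (rule hom_components_vanish[where g = "\<lambda>e x. \<Sum>k<n. G e i k x * x k",
        OF finite_E inj_degree_up _ scale_boundary _ \<open>e \<in> E\<close> \<open>x \<in> boundary n\<close>])
    show "hom_poly n (e' + 1) (\<lambda>x. \<Sum>k<n. G e' i k x * x k)" for e'
      by (intro hom_poly_sum hom_poly.mult hom_G hom_poly.coord) simp
    show "(\<Sum>e\<in>E. \<Sum>k<n. G e i k x * x k) = 0" if "x \<in> boundary n" for x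
    proof -
      have "(\<Sum>e\<in>E. \<Sum>k<n. G e i k x * x k) = (\<Sum>k<n. H i k x * x k)"
        using H_sum \<open>i < n\<close> by (simp add: sum.swap[of _ E] sum_distrib_right)
      then show ?thesis using assms(1) that \<open>i < n\<close> by simp
    qed
  qed
  then show ?thesis by simp
qed

lemma boundary_pd_G:
  assumes "\<forall>x\<in>boundary n. \<forall>i<n. \<forall>k<n. pd (n - 1) (H i k) x = 0"
    and "e \<in> E" "i < n" "k < n" "x \<in> boundary n"
  shows "pd (n - 1) (G e i k) x = 0"
proof (rule hom_components_vanish[where g = "\<lambda>e. pd (n - 1) (G e i k)",
      OF finite_E inj_degree_down _ scale_boundary _ \<open>e \<in> E\<close> \<open>x \<in> boundary n\<close>])
  show "hom_poly n (e' - 1) (pd (n - 1) (G e' i k))" for e' by (rule hom_poly_pd[OF hom_G])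
  show "(\<Sum>e\<in>E. pd (n - 1) (G e i k) x) = 0" if "x \<in> boundary n" for x
  proof -
    have "H i k = (\<lambda>x. \<Sum>e\<in>E. G e i k x)" using H_sum \<open>i < n\<close> \<open>k < n\<close> by auto
    then have "pd (n - 1) (H i k) x = (\<Sum>e\<in>E. pd (n - 1) (G e i k) x)" by (simp add: pd_sum)
    then show ?thesis using assms(1) that \<open>i < n\<close> \<open>k < n\<close> by simp
  qed
qed simp

lemma Z_G:
  assumes "\<forall>x\<in>half_space n. \<forall>i<n. \<forall>j<n. \<forall>k<n. \<forall>l<n. Z_tensor n H i j k l x = 0"
    and "e \<in> E" and ijkl: "i < n" "j < n" "k < n" "l < n"
  shows "Z_tensor n (G e) i j k l x = 0"
proof (rule hom_poly_vanish_from_half_space[OF hom_poly_Z[where F = "G e", OF hom_G]], intro ballI)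
  fix y assume y: "y \<in> half_space n"
  show "Z_tensor n (G e) i j k l y = 0"
  proof (rule hom_components_vanish[where g = "\<lambda>e. Z_tensor n (G e) i j k l",
        OF finite_E inj_degree_down _ scale_half_space _ \<open>e \<in> E\<close> y])
    show "hom_poly n (e' - 2) (Z_tensor n (G e') i j k l)" for e' by (rule hom_poly_Z[OF hom_G])
    show "(\<Sum>e\<in>E. Z_tensor n (G e) i j k l x) = 0" if "x \<in> half_space n" for x
    proof -
      have "Z_tensor n H i j k l x = Z_tensor n (\<lambda>i k x. \<Sum>e\<in>E. G e i k x) i j k l x"
        by (rule Z_cong[OF _ ijkl]) (use H_sum in auto)
      also have "\<dots> = (\<Sum>e\<in>E. Z_tensor n (G e) i j k l x)" by (rule Z_sum[OF finite_E poly_G])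
      finally show ?thesis using assms(1) that ijkl by simp
    qed
  qed simp
qed

lemma hom_Z_flat_component:
  assumes n6: "6 \<le> n"
    and sym: "\<forall>i<n. \<forall>k<n. \<forall>x. H i k x = H k i x"
    and trfree: "\<forall>x. (\<Sum>i<n. H i i x) = 0"
    and Hn: "\<forall>x\<in>half_space n. \<forall>i<n. H i (n - 1) x = 0"
    and bdry1: "\<forall>x\<in>boundary n. \<forall>i<n. (\<Sum>k<n. H i k x * x k) = 0"
    and bdry2: "\<forall>x\<in>boundary n. \<forall>i<n. \<forall>k<n. pd (n - 1) (H i k) x = 0"
    and Z0: "\<forall>x\<in>half_space n. \<forall>i<n. \<forall>j<n. \<forall>k<n. \<forall>l<n. Z_tensor n H i j k l x = 0"
    and e: "e \<in> E"
  shows "hom_Z_flat n e (G e)"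
proof
  show "6 \<le> n" "2 \<le> e" "hom_poly n e (G e i k)" for i k using n6 deg_E[OF e] hom_G by simp_all
  show "G e i k = G e k i" if "i < n" "k < n" for i k by (rule sym_G[OF sym e that])
  show "(\<Sum>i<n. G e i i x) = 0" for x by (rule trace_G[OF trfree e])
  show "G e i (n - 1) x = 0" if "i < n" for i x by (rule normal_G[OF Hn _ e that]) (use n6 in simp)
  show "(\<Sum>k<n. G e i k x * x k) = 0" if "x \<in> boundary n" "i < n" for x i
    by (rule boundary_G[OF bdry1 e that(2,1)])
  show "pd (n - 1) (G e i k) x = 0" if "x \<in> boundary n" "i < n" "k < n" for x i k
    by (rule boundary_pd_G[OF bdry2 e that(2,3,1)])
  show "Z_tensor n (G e) i j k l x = 0" if "i < n" "j < n" "k < n" "l < n" for x i j k l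
    by (rule Z_G[OF Z0 e that])
qed

end

lemma finite_multi_idx: "finite (multi_idx n d)"
proof (rule finite_subset)
  show "multi_idx n d \<subseteq> {\<alpha>. \<forall>j. (j \<in> {..<n} \<longrightarrow> \<alpha> j \<in> {..d}) \<and> (j \<notin> {..<n} \<longrightarrow> \<alpha> j = 0)}"
  proof
    fix \<alpha> assume \<alpha>: "\<alpha> \<in> multi_idx n d"
    have "\<alpha> j \<le> d" if "j < n" for j
      using member_le_sum[of j "{..<n}" \<alpha>] \<alpha> that unfolding multi_idx_def by simp
    then show "\<alpha> \<in> {\<alpha>. \<forall>j. (j \<in> {..<n} \<longrightarrow> \<alpha> j \<in> {..d}) \<and> (j \<notin> {..<n} \<longrightarrow> \<alpha> j = 0)}"
      using \<alpha> unfolding multi_idx_def by auto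
  qed
  show "finite {\<alpha>. \<forall>j. (j \<in> {..<n} \<longrightarrow> \<alpha> j \<in> {..d}) \<and> (j \<notin> {..<n} \<longrightarrow> \<alpha> j = 0)}"
    by (rule finite_set_of_finite_funs) auto
qed

lemma hom_decomposition_exists:
  assumes "\<forall>i<n. \<forall>k<n. \<forall>x. H i k x = (\<Sum>\<alpha>\<in>multi_idx n d. h i k \<alpha> * monom n \<alpha> x)"
  shows "\<exists>E G. hom_decomposition n E G H"
proof -
  define deg where "deg \<alpha> = sum \<alpha> {..<n}" for \<alpha> :: "nat \<Rightarrow> nat"
  define G where "G e i k x = (\<Sum>\<alpha>\<in>{\<alpha> \<in> multi_idx n d. deg \<alpha> = e}. h i k \<alpha> * monom n \<alpha> x)" for e i k x
  have "hom_decomposition n (deg ` multi_idx n d) G H"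
  proof
    show "finite (deg ` multi_idx n d)" using finite_multi_idx by simp
    show "2 \<le> e" if "e \<in> deg ` multi_idx n d" for e using that unfolding multi_idx_def deg_def by auto
    show "hom_poly n e (G e i k)" for e i k
      unfolding G_def[abs_def] deg_def multi_idx_def
      by (intro hom_poly_sum hom_poly_cmult) (auto intro: hom_poly_monom)
    show "H i k x = (\<Sum>e\<in>deg ` multi_idx n d. G e i k x)" if "i < n" "k < n" for i k x
      unfolding G_def using assms that finite_multi_idx by (simp add: sum.group)
  qed
  then show ?thesis by blast
qed

theorem proposition2p3:
  fixes n :: nat and H :: "nat \<Rightarrow> nat \<Rightarrow> (nat \<Rightarrow> real) \<Rightarrow> real"
  assumes n6: "6 \<le> n"
    and poly: "\<exists>h :: nat \<Rightarrow> nat \<Rightarrow> (nat \<Rightarrow> nat) \<Rightarrow> real. \<forall>i<n. \<forall>k<n. \<forall>x.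
                 H i k x = (\<Sum>\<alpha>\<in>multi_idx n ((n - 2) div 2). h i k \<alpha> * monom n \<alpha> x)"
    and sym: "\<forall>i<n. \<forall>k<n. \<forall>x. H i k x = H k i x"
    and trfree: "\<forall>x. (\<Sum>i<n. H i i x) = 0"
    and Hn: "\<forall>x\<in>half_space n. \<forall>i<n. H i (n - 1) x = 0"
    and bdry1: "\<forall>x\<in>boundary n. \<forall>i<n. (\<Sum>k<n. H i k x * x k) = 0"
    and bdry2: "\<forall>x\<in>boundary n. \<forall>i<n. \<forall>k<n. pd (n - 1) (H i k) x = 0"
    and Z0: "\<forall>x\<in>half_space n. \<forall>i<n. \<forall>j<n. \<forall>k<n. \<forall>l<n. Z_tensor n H i j k l x = 0"
  shows "\<forall>x\<in>half_space n. \<forall>i<n - 1. \<forall>k<n - 1. H i k x = 0"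
proof (intro ballI allI impI)
  fix x i k assume i: "i < n - 1" and k: "k < n - 1"
  obtain E G where dec: "hom_decomposition n E G H"
    using poly hom_decomposition_exists by blast
  have "G e i k x = 0" if "e \<in> E" for e
    using hom_decomposition.hom_Z_flat_component[OF dec n6 sym trfree Hn bdry1 bdry2 Z0 that]
      hom_Z_flat.H_tangential_zero i k by blast
  then show "H i k x = 0" using hom_decomposition.H_sum[OF dec] i k by simp
qed

end
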